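(* Let $0\le\alpha<1$, $\mu\le\mu(\alpha)=\frac{(1-\alpha)^2}{4}$, $a_1,a_2\in\mathbb{R}$, and let $\alpha_1,\alpha_2$ be the eigenvalues of $A=\begin{pmatrix}0&a_1\\1&a_2\end{pmatrix}$ (labelled as in the context). Assume $$\lambda_{\alpha,\mu,n}-\lambda_{\alpha,\mu,l}\neq\alpha_1-\alpha_2\quad\text{for all }n,l\in\mathbb{N}^*,\ n\neq l.$$ Then the family $\{\lambda_{\alpha,\mu,n}-\alpha_1+\alpha_2,\ \lambda_{\alpha,\mu,n}\}_{n\ge1}=\{\lambda_{\alpha,\mu,n}+\alpha_2-\alpha_1: n\ge1\}\cup\{\lambda_{\alpha,\mu,n}:n\ge1\}$ can be arranged into a sequence $(\Lambda_{\alpha,\mu,n})_{n\ge1}$ of complex numbers satisfying: (1) $\Lambda_{\alpha,\mu,n}\neq\Lambda_{\alpha,\mu,m}$ for all $n\neq m$; (2) $\Re(\Lambda_{\alpha,\mu,n})>0$ for all $n\ge1$; (3) there is $\delta>0$ with $|\Im(\Lambda_{\alpha,\mu,n})|\le\delta\sqrt{\Re(\Lambda_{\alpha,\mu,n})}$ for all $n\ge1$; (4) $|\Lambda_{\alpha,\mu,n}|\le|\Lambda_{\alpha,\mu,n+1}|$ for all $n\ge1$; (5) there are $\varrho,q>0$ with $|\Lambda_{\alpha,\mu,n}-\Lambda_{\alpha,\mu,m}|\ge\varrho|n^2-m^2|$ for all $n,m$ with $|n-m|\ge q$, and $\inf_{n\neq m,\,|n-m|<q}|\Lambda_{\alpha,\mu,n}-\Lambda_{\alpha,\mu,m}|>0$;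 (6) there are $p,s>0$ with $|p\sqrt r-\mathcal N(r)|\le s$ for all $r>0$, where $\mathcal N(r)=\#\{n:|\Lambda_{\alpha,\mu,n}|\le r\}$.
   Context: $\nu(\alpha,\mu)=\frac{2}{2-\alpha}\sqrt{\mu(\alpha)-\mu}$, $(j_{\nu,n})_{n\ge1}$ is the increasing sequence of positive zeros of the Bessel function $J_\nu$, and $\lambda_{\alpha,\mu,n}=\left(\frac{2-\alpha}{2}\right)^2 j_{\nu(\alpha,\mu),n}^2$ (the Dirichlet eigenvalues of $-(x^\alpha\Phi')'-\mu x^{\alpha-2}\Phi$ on $(0,1)$). Labelling of eigenvalues of $A$: if $a_2^2+4a_1>0$, $\alpha_1=\frac12(a_2-\sqrt{a_2^2+4a_1})$, $\alpha_2=\frac12(a_2+\sqrt{a_2^2+4a_1})$; if $a_2^2+4a_1<0$, $\alpha_1=\frac12(a_2+i\sqrt{-(a_2^2+4a_1)})$, $\alpha_2=\frac12(a_2-i\sqrt{-(a_2^2+4a_1)})$; if $a_2^2+4a_1=0$, $\alpha_1=\alpha_2=a_2/2$ (in which case the family reduces to $\{\lambda_{\alpha,\mu,n}\}_{n\ge1}$). *)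

theory Defs
  imports "HOL-Analysis.Analysis"
begin

definition besselJ :: "real \<Rightarrow> real \<Rightarrow> real" where
  "besselJ nu x = (\<Sum>k. (-1) ^ k / (fact k * Gamma (real k + nu + 1)) * (x / 2) powr (2 * real k + nu))"

text \<open>The n-th positive zero (n \<ge> 1) of J_nu, in increasing order:
  the positive zero having exactly n-1 positive zeros below it.\<close>
definition bessel_zero :: "real \<Rightarrow> nat \<Rightarrow> real" where
  "bessel_zero nu n = (THE x. 0 < x \<and> besselJ nu x = 0 \<and>
      card {y. 0 < y \<and> y < x \<and> besselJ nu y = 0} = n - 1)"

definition mu_crit :: "real \<Rightarrow> real" where
  "mu_crit alpha = (1 - alpha)^2 / 4"

definition nu_of :: "real \<Rightarrow> real \<Rightarrow> real" where
  "nu_of alpha mu = 2 / (2 - alpha) * sqrt (mu_crit alpha - mu)"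

definition lam :: "real \<Rightarrow> real \<Rightarrow> nat \<Rightarrow> real" where
  "lam alpha mu n = ((2 - alpha) / 2)^2 * (bessel_zero (nu_of alpha mu) n)^2"

text \<open>Eigenvalues of A = [[0,a1],[1,a2]], labelled as in the paper.\<close>
definition eig1 :: "real \<Rightarrow> real \<Rightarrow> complex" where
  "eig1 a1 a2 = (if a2^2 + 4*a1 > 0 then complex_of_real ((a2 - sqrt (a2^2 + 4*a1)) / 2)
     else if a2^2 + 4*a1 < 0 then Complex (a2/2) (sqrt (-(a2^2 + 4*a1)) / 2)
     else complex_of_real (a2 / 2))"

definition eig2 :: "real \<Rightarrow> real \<Rightarrow> complex" where
  "eig2 a1 a2 = (if a2^2 + 4*a1 > 0 then complex_of_real ((a2 + sqrt (a2^2 + 4*a1)) / 2)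
     else if a2^2 + 4*a1 < 0 then Complex (a2/2) (- sqrt (-(a2^2 + 4*a1)) / 2)
     else complex_of_real (a2 / 2))"

end

(* Let j_n be the n-th positive zero of J_nu.  The function sqrt x * J_nu(x) solves
   u'' + (1 - (nu^2 - 1/4) / x^2) u = 0, so Sturm comparison with sin(w x) shows that consecutive
   zeros are uniformly separated and that j_(n+1) - j_n = pi + O(j_n^-2); telescoping gives
   j_n = pi n + O(1).  Hence lambda_n = kappa^2 j_n^2 with kappa = (2 - alpha)/2 has gaps of size
   at least c (j_n + j_m), and the union of the lambda_n with their shifts lambda_n + d,
   d = alpha_2 - alpha_1, Re d >= 0, enumerated by modulus, has the counting function
   p sqrt r + O(1).  The counting estimate alone yields the quadratic separation for distant
   indices; for nearby indices a uniform separation follows from the gaps of the lambda_n,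
   which exceed 2 |d| for large indices, and from the non-resonance hypothesis for the finitely
   many remaining pairs. *)

theory Submission
  imports Defs "HOL-Complex_Analysis.Complex_Analysis"
begin

section \<open>Sturm comparison\<close>

lemma continuous_on_nonzero_same_sign:
  fixes u :: "real \<Rightarrow> real"
  assumes "connected S" "continuous_on S u" "\<And>x. x \<in> S \<Longrightarrow> u x \<noteq> 0" "x \<in> S" "y \<in> S"
  shows "u x * u y > 0"
proof (rule ccontr)
  assume "\<not> u x * u y > 0"
  then have "min (u x) (u y) \<le> 0" "0 \<le> max (u x) (u y)"
    by (auto simp: zero_less_mult_iff min_def max_def)
  moreover have "connected (u ` S)" using assms(1,2) by (simp add: connected_continuous_image)
  moreover have "min (u x) (u y) \<in> u ` S" "max (u x) (u y) \<in> u ` S"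
    using assms(4,5) by (auto simp: min_def max_def)
  ultimately have "0 \<in> u ` S" unfolding connected_iff_interval by blast
  then show False using assms(3) by auto
qed

text \<open>The Wronskian of \<open>u\<close> with the solution \<open>sin (w * (x - a))\<close> of \<open>v'' + w\<^sup>2 v = 0\<close>.\<close>

definition sturm_wronskian ::
    "(real \<Rightarrow> real) \<Rightarrow> (real \<Rightarrow> real) \<Rightarrow> real \<Rightarrow> real \<Rightarrow> real \<Rightarrow> real" where
  "sturm_wronskian u u' w a x = u' x * sin (w * (x - a)) - u x * w * cos (w * (x - a))"

lemma has_real_derivative_sturm_wronskian:
  assumes "(u has_real_derivative u' x) (at x)" "(u' has_real_derivative - Q x * u x) (at x)"
  shows "(sturm_wronskian u u' w a has_real_derivative (w^2 - Q x) * u x * sin (w * (x - a))) (at x)"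
  unfolding sturm_wronskian_def[abs_def]
  by (rule derivative_eq_intros assms refl | simp add: algebra_simps power2_eq_square)+

lemma sturm_wronskian_mvt:
  assumes "w > 0" "a < b" "w * (b - a) \<le> pi"
    and du: "\<And>x. x \<in> {a..b} \<Longrightarrow> (u has_real_derivative u' x) (at x)"
    and du': "\<And>x. x \<in> {a..b} \<Longrightarrow> (u' has_real_derivative - Q x * u x) (at x)"
  obtains z where "a < z" "z < b" "sin (w * (z - a)) > 0"
    "sturm_wronskian u u' w a b - sturm_wronskian u u' w a a
       = (b - a) * ((w^2 - Q z) * u z * sin (w * (z - a)))"
proof -
  have dW: "(sturm_wronskian u u' w a has_real_derivative (w^2 - Q x) * u x * sin (w * (x - a))) (at x)"
    if "a \<le> x" "x \<le> b" for x using du du' that by (auto intro: has_real_derivative_sturm_wronskian)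
  obtain z where z: "a < z" "z < b" "sturm_wronskian u u' w a b - sturm_wronskian u u' w a a
       = (b - a) * ((w^2 - Q z) * u z * sin (w * (z - a)))"
    using MVT2[OF \<open>a < b\<close> dW] by blast
  moreover have "sin (w * (z - a)) > 0"
  proof (rule sin_gt_zero)
    show "0 < w * (z - a)" using z assms(1) by simp
    have "w * (z - a) < w * (b - a)" using z assms(1) by simp
    then show "w * (z - a) < pi" using assms(3) by linarith
  qed
  ultimately show ?thesis using that by blast
qed

lemma sturm_zero_exists_pos:
  assumes w: "w > 0" and Q: "\<And>x. x \<in> {a..a + pi / w} \<Longrightarrow> w^2 \<le> Q x"
    and du: "\<And>x. x \<in> {a..a + pi / w} \<Longrightarrow> (u has_real_derivative u' x) (at x)"
    and du': "\<And>x. x \<in> {a..a + pi / w} \<Longrightarrow> (u' has_real_derivative - Q x * u x) (at x)"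
    and pos: "\<And>x. x \<in> {a<..a + pi / w} \<Longrightarrow> u x > 0"
  shows False
proof -
  define b where "b = a + pi / w"
  have ab: "a < b" and wb: "w * (b - a) = pi" using w by (simp_all add: b_def)
  have "u a \<ge> 0"
  proof (rule ccontr)
    assume "\<not> u a \<ge> 0"
    moreover have "continuous_on {a..b} u"
      by (intro continuous_at_imp_continuous_on ballI DERIV_isCont[OF du]) (auto simp: b_def)
    ultimately obtain y where "a \<le> y" "y \<le> b" "u y = 0"
      using IVT'[of u a 0 b] pos[of b] ab by (auto simp: b_def)
    then show False using pos[of y] \<open>\<not> u a \<ge> 0\<close> by (cases "y = a") (auto simp: b_def)
  qed
  obtain z where z: "a < z" "z < b" "sin (w * (z - a)) > 0"
    and W: "sturm_wronskian u u' w a b - sturm_wronskian u u' w a a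
       = (b - a) * ((w^2 - Q z) * u z * sin (w * (z - a)))"
    using sturm_wronskian_mvt[OF w ab _ du du'] wb by (auto simp: b_def)
  have "(w^2 - Q z) * u z * sin (w * (z - a)) \<le> 0"
    using Q[of z] pos[of z] z by (intro mult_nonpos_nonneg) (auto simp: b_def)
  then have "sturm_wronskian u u' w a b - sturm_wronskian u u' w a a \<le> 0"
    unfolding W using ab by (simp add: mult_nonneg_nonpos)
  moreover have "sturm_wronskian u u' w a b = w * u b" "sturm_wronskian u u' w a a = - w * u a"
    using wb by (simp_all add: sturm_wronskian_def mult.commute)
  moreover have "w * u b > 0" using pos[of b] ab w by (simp add: b_def)
  moreover have "w * u a \<ge> 0" using \<open>u a \<ge> 0\<close> w by simp
  ultimately show False by linarith
qed

lemma sturm_zero_gap_pos: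
  assumes w: "w > 0" and ab: "a < b" and short: "w * (b - a) < pi"
    and "u a = 0" "u b = 0" and Q: "\<And>x. x \<in> {a..b} \<Longrightarrow> Q x < w^2"
    and du: "\<And>x. x \<in> {a..b} \<Longrightarrow> (u has_real_derivative u' x) (at x)"
    and du': "\<And>x. x \<in> {a..b} \<Longrightarrow> (u' has_real_derivative - Q x * u x) (at x)"
    and pos: "\<And>x. x \<in> {a<..<b} \<Longrightarrow> u x > 0"
  shows False
proof -
  obtain z where z: "a < z" "z < b" "sin (w * (z - a)) > 0"
    and W: "sturm_wronskian u u' w a b - sturm_wronskian u u' w a a
       = (b - a) * ((w^2 - Q z) * u z * sin (w * (z - a)))"
    using sturm_wronskian_mvt[OF w ab less_imp_le[OF short] du du'] by blast
  have "(w^2 - Q z) * u z * sin (w * (z - a)) > 0" using Q[of z] pos[of z] z by simp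
  then have "sturm_wronskian u u' w a b - sturm_wronskian u u' w a a > 0" unfolding W using ab by simp
  moreover have "sin (w * (b - a)) > 0" using short w ab by (intro sin_gt_zero) auto
  ultimately have "u' b > 0"
    using \<open>u a = 0\<close> \<open>u b = 0\<close> by (simp add: sturm_wronskian_def zero_less_mult_iff)
  then obtain d where d: "d > 0" "\<And>h. 0 < h \<Longrightarrow> h < d \<Longrightarrow> u (b - h) < u b"
    using DERIV_pos_inc_left[OF du[of b]] ab by auto
  define h where "h = min d (b - a) / 2"
  have "h > 0" "h < d" "h < b - a" using d ab by (auto simp: h_def)
  then show False using d(2)[of h] pos[of "b - h"] \<open>u b = 0\<close> by auto
qed

lemma sturm_comparison_zero_exists:
  assumes w: "w > 0" and Q: "\<And>x. x \<in> {a..a + pi / w} \<Longrightarrow> w^2 \<le> Q x"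
    and du: "\<And>x. x \<in> {a..a + pi / w} \<Longrightarrow> (u has_real_derivative u' x) (at x)"
    and du': "\<And>x. x \<in> {a..a + pi / w} \<Longrightarrow> (u' has_real_derivative - Q x * u x) (at x)"
  shows "\<exists>x\<in>{a<..a + pi / w}. u x = 0"
proof (rule ccontr)
  assume nz: "\<not> (\<exists>x\<in>{a<..a + pi / w}. u x = 0)"
  define b where "b = a + pi / w"
  define s where "s = sgn (u b)"
  have "continuous_on {a<..b} u"
    by (intro continuous_at_imp_continuous_on ballI DERIV_isCont[OF du]) (auto simp: b_def)
  then have same: "u x * u b > 0" if "x \<in> {a<..b}" for x
    using nz that w by (intro continuous_on_nonzero_same_sign) (auto simp: b_def)
  have pos: "s * u x > 0" if "x \<in> {a<..a + pi / w}" for x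
    using same[of x] that by (auto simp: s_def b_def sgn_if zero_less_mult_iff)
  have ds: "((\<lambda>x. s * u x) has_real_derivative s * u' x) (at x)"
    and ds': "((\<lambda>x. s * u' x) has_real_derivative - Q x * (s * u x)) (at x)"
    if "x \<in> {a..a + pi / w}" for x
    using DERIV_cmult[OF du[OF that], of s] DERIV_cmult[OF du'[OF that], of s]
    by (simp_all add: algebra_simps)
  show False
    by (rule sturm_zero_exists_pos[where u = "\<lambda>x. s * u x" and u' = "\<lambda>x. s * u' x", OF w Q ds ds' pos])
qed

lemma sturm_comparison_zero_gap:
  assumes w: "w > 0" and ab: "a < b" and "u a = 0" "u b = 0"
    and Q: "\<And>x. x \<in> {a..b} \<Longrightarrow> Q x < w^2"
    and du: "\<And>x. x \<in> {a..b} \<Longrightarrow> (u has_real_derivative u' x) (at x)"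
    and du': "\<And>x. x \<in> {a..b} \<Longrightarrow> (u' has_real_derivative - Q x * u x) (at x)"
    and nz: "\<And>x. x \<in> {a<..<b} \<Longrightarrow> u x \<noteq> 0"
  shows "pi / w \<le> b - a"
proof (rule ccontr)
  assume "\<not> pi / w \<le> b - a"
  then have short: "w * (b - a) < pi" using w by (simp add: field_simps)
  define m where "m = (a + b) / 2"
  define s where "s = sgn (u m)"
  have "continuous_on {a<..<b} u"
    by (intro continuous_at_imp_continuous_on ballI DERIV_isCont[OF du]) auto
  then have same: "u x * u m > 0" if "x \<in> {a<..<b}" for x
    using nz that ab by (intro continuous_on_nonzero_same_sign) (auto simp: m_def)
  have pos: "s * u x > 0" if "x \<in> {a<..<b}" for x
    using same[of x] that by (auto simp: s_def sgn_if zero_less_mult_iff)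
  have ds: "((\<lambda>x. s * u x) has_real_derivative s * u' x) (at x)"
    and ds': "((\<lambda>x. s * u' x) has_real_derivative - Q x * (s * u x)) (at x)"
    if "x \<in> {a..b}" for x
    using DERIV_cmult[OF du[OF that], of s] DERIV_cmult[OF du'[OF that], of s]
    by (simp_all add: algebra_simps)
  show False
    by (rule sturm_zero_gap_pos[where u = "\<lambda>x. s * u x" and u' = "\<lambda>x. s * u' x", OF w ab short
          _ _ Q ds ds' pos]) (simp_all add: \<open>u a = 0\<close> \<open>u b = 0\<close>)
qed

section \<open>Enumerating a set by rank\<close>

lemma rank_strict_mono:
  assumes "\<And>x. x \<in> S \<Longrightarrow> \<not> lt x x"
    and "\<And>x y z. x \<in> S \<Longrightarrow> y \<in> S \<Longrightarrow> z \<in> S \<Longrightarrow> lt x y \<Longrightarrow> lt y z \<Longrightarrow> lt x z"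
    and "\<And>x. x \<in> S \<Longrightarrow> finite {y\<in>S. lt y x}"
    and "x \<in> S" "y \<in> S" "lt x y"
  shows "card {z\<in>S. lt z x} < card {z\<in>S. lt z y}"
proof -
  have "{z\<in>S. lt z x} \<subset> {z\<in>S. lt z y}" using assms by blast
  then show ?thesis using assms(3,5) by (intro psubset_card_mono) auto
qed

lemma bij_betw_rank:
  assumes irrefl: "\<And>x. x \<in> S \<Longrightarrow> \<not> lt x x"
    and trans: "\<And>x y z. x \<in> S \<Longrightarrow> y \<in> S \<Longrightarrow> z \<in> S \<Longrightarrow> lt x y \<Longrightarrow> lt y z \<Longrightarrow> lt x z"
    and total: "\<And>x y. x \<in> S \<Longrightarrow> y \<in> S \<Longrightarrow> x \<noteq> y \<Longrightarrow> lt x y \<or> lt y x"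
    and fin: "\<And>x. x \<in> S \<Longrightarrow> finite {y\<in>S. lt y x}"
    and "infinite S"
  shows "bij_betw (\<lambda>x. card {y\<in>S. lt y x}) S UNIV"
proof -
  define rk where "rk x = card {y\<in>S. lt y x}" for x
  have mono: "rk x < rk y" if "x \<in> S" "y \<in> S" "lt x y" for x y
    unfolding rk_def using irrefl trans fin that by (rule rank_strict_mono)
  have inj: "inj_on rk S"
    by (rule inj_onI) (metis mono total less_irrefl)
  have below: "rk ` {y\<in>S. lt y x} = {..<rk x}" if "x \<in> S" for x
  proof -
    have "card (rk ` {y\<in>S. lt y x}) = card {..<rk x}"
      using inj_on_subset[OF inj] by (subst card_image) (auto simp: rk_def)
    moreover have "rk ` {y\<in>S. lt y x} \<subseteq> {..<rk x}" using mono that by auto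
    ultimately show ?thesis by (intro card_subset_eq) auto
  qed
  have "rk ` S = UNIV"
  proof (intro equalityI subsetI)
    fix n :: nat
    have "infinite (rk ` S)" using inj \<open>infinite S\<close> finite_image_iff by blast
    then obtain k where "k \<in> rk ` S" "n < k" unfolding infinite_nat_iff_unbounded by blast
    then obtain x where "x \<in> S" "n < rk x" by blast
    then show "n \<in> rk ` S" using below[of x] by (metis (no_types, lifting) image_iff lessThan_iff mem_Collect_eq)
  qed simp
  then show ?thesis using inj unfolding bij_betw_def rk_def by simp
qed

section \<open>The power series of the Bessel function\<close>

definition bessel_coeff :: "real \<Rightarrow> nat \<Rightarrow> real" where
  "bessel_coeff nu k = (-1) ^ k / (fact k * Gamma (real k + nu + 1) * 4 ^ k)"

lemma bessel_coeff_Suc: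
  assumes "nu > -1"
  shows "bessel_coeff nu (Suc k) = - bessel_coeff nu k / (4 * (real k + 1) * (real k + nu + 1))"
proof -
  have pos: "real k + nu + 1 > 0" using assms by linarith
  then have "Gamma (real k + nu + 1 + 1) = (real k + nu + 1) * Gamma (real k + nu + 1)"
    by (intro Gamma_plus1) (auto elim!: nonpos_Ints_cases)
  moreover have "Gamma (real k + nu + 1) > 0" using pos by simp
  ultimately show ?thesis
    using pos unfolding bessel_coeff_def by (simp add: field_simps add.commute add.left_commute)
qed

lemma summable_bessel_coeff:
  fixes z :: "'a::{real_normed_field,banach}"
  assumes "nu > -1"
  shows "summable (\<lambda>k. of_real (bessel_coeff nu k) * z ^ k)"
proof (rule summable_ratio_test[where c = "1/2" and N = "nat \<lceil>norm z\<rceil>"])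
  fix n assume n: "n \<ge> nat \<lceil>norm z\<rceil>"
  define D where "D = 4 * (real n + 1) * (real n + nu + 1)"
  have D: "D > 0" using assms by (simp add: D_def add_pos_pos)
  have "norm z \<le> real n" using n by linarith
  also have "real n \<le> (real n + 1) * (real n + nu + 1)"
    using mult_mono[of 1 "real n + 1" "real n" "real n + nu + 1"] assms by simp
  also have "\<dots> = D / 4" by (simp add: D_def)
  also have "\<dots> \<le> D / 2" using D by simp
  finally have "norm z / D \<le> 1/2" using D by (simp add: divide_simps)
  then have "\<bar>bessel_coeff nu n\<bar> * norm z ^ n * (norm z / D) \<le> \<bar>bessel_coeff nu n\<bar> * norm z ^ n * (1/2)"
    by (intro mult_left_mono) auto
  moreover have "\<bar>bessel_coeff nu (Suc n)\<bar> = \<bar>bessel_coeff nu n\<bar> / D"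
    using assms D by (simp add: bessel_coeff_Suc D_def abs_divide)
  ultimately show "norm (of_real (bessel_coeff nu (Suc n)) * z ^ Suc n)
      \<le> 1/2 * norm (of_real (bessel_coeff nu n) * z ^ n)"
    by (simp add: norm_mult norm_power mult_ac)
qed simp

lemma finite_zeros_real_powser:
  fixes a :: "nat \<Rightarrow> real"
  assumes conv: "\<And>z::complex. summable (\<lambda>k. of_real (a k) * z ^ k)" and "a 0 \<noteq> 0"
  shows "finite {t. \<bar>t\<bar> \<le> T \<and> (\<Sum>k. a k * t ^ k) = 0}"
proof -
  define F :: "complex \<Rightarrow> complex" where "F z = (\<Sum>k. of_real (a k) * z ^ k)" for z
  have "(F has_field_derivative (\<Sum>k. diffs (\<lambda>k. of_real (a k)) k * z ^ k)) (at z)" for z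
    unfolding F_def[abs_def] by (rule termdiffs_strong_converges_everywhere) (rule conv)
  then have holo: "F holomorphic_on UNIV" by (auto simp: holomorphic_on_open)
  have F_real: "F (of_real t) = of_real (\<Sum>k. a k * t ^ k)" for t
  proof -
    have "summable (\<lambda>k. of_real (a k * t ^ k) :: complex)" using conv[of "of_real t"] by simp
    then have "summable (\<lambda>k. a k * t ^ k)" by (simp only: summable_of_real_iff)
    then show ?thesis unfolding F_def by (simp add: suminf_of_real)
  qed
  have "F 0 \<noteq> 0" using F_real[of 0] \<open>a 0 \<noteq> 0\<close> by simp
  have fin: "finite {z\<in>cball 0 T. F z = 0}"
  proof (cases "F constant_on UNIV")
    case True
    then have "F z \<noteq> 0" for z using \<open>F 0 \<noteq> 0\<close> by (metis UNIV_I constant_on_def)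
    then show ?thesis by simp
  next
    case False
    then show ?thesis by (intro holomorphic_compact_finite_zeros[OF holo]) auto
  qed
  have "{t. \<bar>t\<bar> \<le> T \<and> (\<Sum>k. a k * t ^ k) = 0} \<subseteq> Re ` {z\<in>cball 0 T. F z = 0}"
  proof
    fix t assume "t \<in> {t. \<bar>t\<bar> \<le> T \<and> (\<Sum>k. a k * t ^ k) = 0}"
    then have "complex_of_real t \<in> {z\<in>cball 0 T. F z = 0}" using F_real[of t] by auto
    then show "t \<in> Re ` {z\<in>cball 0 T. F z = 0}" by (metis Re_complex_of_real image_eqI)
  qed
  then show ?thesis using fin finite_subset by blast
qed

definition bessel_G :: "real \<Rightarrow> real \<Rightarrow> real" where
  "bessel_G nu t = (\<Sum>k. bessel_coeff nu k * t ^ k)"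

definition bessel_G' :: "real \<Rightarrow> real \<Rightarrow> real" where
  "bessel_G' nu t = (\<Sum>k. diffs (bessel_coeff nu) k * t ^ k)"

definition bessel_G'' :: "real \<Rightarrow> real \<Rightarrow> real" where
  "bessel_G'' nu t = (\<Sum>k. diffs (diffs (bessel_coeff nu)) k * t ^ k)"

context
  fixes nu :: real
  assumes nu: "nu > -1"
begin

lemma summable_bessel_G: "summable (\<lambda>k. bessel_coeff nu k * t ^ k)"
  using summable_bessel_coeff[OF nu, of t] by simp

lemma summable_bessel_G': "summable (\<lambda>k. diffs (bessel_coeff nu) k * t ^ k)"
  by (rule termdiff_converges_all) (rule summable_bessel_G)

lemma summable_bessel_G'': "summable (\<lambda>k. diffs (diffs (bessel_coeff nu)) k * t ^ k)"
  by (rule termdiff_converges_all) (rule summable_bessel_G')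

lemma has_real_derivative_bessel_G: "(bessel_G nu has_real_derivative bessel_G' nu t) (at t)"
  unfolding bessel_G_def bessel_G'_def
  by (rule termdiffs_strong_converges_everywhere) (rule summable_bessel_G)

lemma has_real_derivative_bessel_G': "(bessel_G' nu has_real_derivative bessel_G'' nu t) (at t)"
  unfolding bessel_G'_def bessel_G''_def
  by (rule termdiffs_strong_converges_everywhere) (rule summable_bessel_G')

lemma bessel_G_ode: "4 * t * bessel_G'' nu t + 4 * (nu + 1) * bessel_G' nu t + bessel_G nu t = 0"
proof -
  define a where "a = bessel_coeff nu"
  define f where "f = (\<lambda>m. real m * diffs a m * t ^ m)"
  have "(\<lambda>n. t * (diffs (diffs a) n * t ^ n)) sums (t * bessel_G'' nu t)"
    unfolding a_def bessel_G''_def by (intro sums_mult summable_sums summable_bessel_G'')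
  moreover have "(\<lambda>n. t * (diffs (diffs a) n * t ^ n)) = (\<lambda>n. f (Suc n))"
    by (auto simp: f_def diffs_def algebra_simps)
  ultimately have "f sums (t * bessel_G'' nu t)"
    using sums_Suc_iff[of f] by (simp add: f_def)
  then have "(\<lambda>n. 4 * f n + 4 * (nu + 1) * (diffs a n * t ^ n) + a n * t ^ n) sums
      (4 * (t * bessel_G'' nu t) + 4 * (nu + 1) * bessel_G' nu t + bessel_G nu t)"
    unfolding a_def bessel_G'_def bessel_G_def
    by (intro sums_add sums_mult summable_sums summable_bessel_G' summable_bessel_G)
  moreover have "4 * f n + 4 * (nu + 1) * (diffs a n * t ^ n) + a n * t ^ n = 0" for n
  proof -
    have "(real n + 1) * (real n + nu + 1) > 0" using nu by (simp add: add_pos_pos)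
    then have "4 * (real n + 1) * (real n + nu + 1) * a (Suc n) + a n = 0"
      unfolding a_def bessel_coeff_Suc[OF nu] by (simp add: field_simps)
    moreover have "4 * f n + 4 * (nu + 1) * (diffs a n * t ^ n) + a n * t ^ n
        = t ^ n * (4 * (real n + 1) * (real n + nu + 1) * a (Suc n) + a n)"
      unfolding f_def diffs_def by (simp add: algebra_simps)
    ultimately show ?thesis by simp
  qed
  ultimately have "(\<lambda>n. 0) sums (4 * (t * bessel_G'' nu t) + 4 * (nu + 1) * bessel_G' nu t + bessel_G nu t)"
    by simp
  then show ?thesis using sums_unique[OF sums_zero] by (simp add: sums_iff mult.assoc)
qed

lemma besselJ_eq_bessel_G:
  assumes "x > 0"
  shows "besselJ nu x = (x / 2) powr nu * bessel_G nu (x^2)"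
proof -
  have pow: "(x / 2) powr (2 * real k + nu) = (x / 2) powr nu * ((x^2) ^ k / 4 ^ k)" for k
  proof -
    have "(x / 2) powr (2 * real k + nu) = (x / 2) powr nu * (x / 2) ^ (2 * k)"
      using assms by (simp add: powr_add powr_realpow[symmetric] mult.commute)
    also have "(x / 2) ^ (2 * k) = (x^2) ^ k / 4 ^ k" by (simp add: power_mult power_divide)
    finally show ?thesis .
  qed
  have "(-1) ^ k / (fact k * Gamma (real k + nu + 1)) * (x / 2) powr (2 * real k + nu)
      = (x / 2) powr nu * (bessel_coeff nu k * (x^2) ^ k)" for k
    unfolding pow bessel_coeff_def by (simp add: field_simps)
  then show ?thesis
    unfolding besselJ_def bessel_G_def by (simp add: suminf_mult[OF summable_bessel_G])
qed

lemma finite_bessel_G_zeros: "finite {t. \<bar>t\<bar> \<le> T \<and> bessel_G nu t = 0}"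
proof -
  have "Gamma (nu + 1) > 0" using nu by simp
  then have "bessel_coeff nu 0 \<noteq> 0" by (simp add: bessel_coeff_def)
  then show ?thesis
    unfolding bessel_G_def by (intro finite_zeros_real_powser summable_bessel_coeff nu)
qed

lemma finite_besselJ_zeros: "finite {x. 0 < x \<and> x \<le> X \<and> besselJ nu x = 0}"
proof -
  have "{x. 0 < x \<and> x \<le> X \<and> besselJ nu x = 0} \<subseteq> sqrt ` {t. \<bar>t\<bar> \<le> X^2 \<and> bessel_G nu t = 0}"
  proof
    fix x assume x: "x \<in> {x. 0 < x \<and> x \<le> X \<and> besselJ nu x = 0}"
    then have "x^2 \<in> {t. \<bar>t\<bar> \<le> X^2 \<and> bessel_G nu t = 0}"
      using besselJ_eq_bessel_G[of x] by (auto intro!: power_mono)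
    moreover have "x = sqrt (x^2)" using x by simp
    ultimately show "x \<in> sqrt ` {t. \<bar>t\<bar> \<le> X^2 \<and> bessel_G nu t = 0}" by blast
  qed
  then show ?thesis using finite_bessel_G_zeros finite_subset by blast
qed

end

section \<open>Bessel's equation in normal form\<close>

text \<open>The function \<open>bessel_u nu x = 2 powr nu * sqrt x * J\<^sub>\<nu>(x)\<close> solves \<open>u'' + bessel_q nu * u = 0\<close>.\<close>

definition bessel_u :: "real \<Rightarrow> real \<Rightarrow> real" where
  "bessel_u nu x = x powr (nu + 1/2) * bessel_G nu (x^2)"

definition bessel_u' :: "real \<Rightarrow> real \<Rightarrow> real" where
  "bessel_u' nu x = (nu + 1/2) * (x powr (nu - 1/2) * bessel_G nu (x^2))
     + 2 * (x powr (nu + 3/2) * bessel_G' nu (x^2))"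

definition bessel_q :: "real \<Rightarrow> real \<Rightarrow> real" where
  "bessel_q nu x = 1 - (nu^2 - 1/4) / x^2"

context
  fixes nu :: real
  assumes nu: "nu > -1"
begin

lemma bessel_u_eq_0_iff: "x > 0 \<Longrightarrow> bessel_u nu x = 0 \<longleftrightarrow> besselJ nu x = 0"
  by (simp add: bessel_u_def besselJ_eq_bessel_G[OF nu])

lemma has_real_derivative_bessel_G_square:
  "((\<lambda>x. bessel_G nu (x^2)) has_real_derivative bessel_G' nu (x^2) * (2 * x)) (at x)"
  "((\<lambda>x. bessel_G' nu (x^2)) has_real_derivative bessel_G'' nu (x^2) * (2 * x)) (at x)"
  by (auto intro!: DERIV_chain2[OF has_real_derivative_bessel_G[OF nu]]
      DERIV_chain2[OF has_real_derivative_bessel_G'[OF nu]] derivative_eq_intros)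

lemma has_real_derivative_bessel_u:
  assumes "x > 0"
  shows "(bessel_u nu has_real_derivative bessel_u' nu x) (at x)"
proof -
  have "(bessel_u nu has_real_derivative (nu + 1/2) * x powr (nu + 1/2 - 1) * bessel_G nu (x^2)
      + bessel_G' nu (x^2) * (2 * x) * x powr (nu + 1/2)) (at x)"
    unfolding bessel_u_def[abs_def]
    by (intro DERIV_mult has_real_derivative_powr assms has_real_derivative_bessel_G_square)
  moreover have "nu + 3/2 = (nu + 1/2) + 1" by simp
  then have "x powr (nu + 3/2) = x powr (nu + 1/2) * x"
    using assms by (simp only: powr_add powr_one)
  ultimately show ?thesis by (simp add: bessel_u'_def algebra_simps)
qed

lemma has_real_derivative_bessel_u':
  assumes x: "x > 0"
  shows "(bessel_u' nu has_real_derivative - bessel_q nu x * bessel_u nu x) (at x)"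
proof -
  define G G' G'' where "G = bessel_G nu (x^2)" and "G' = bessel_G' nu (x^2)"
    and "G'' = bessel_G'' nu (x^2)"
  define P where "P = x powr (nu + 1/2)"
  have D: "(bessel_u' nu has_real_derivative
        (nu + 1/2) * ((nu - 1/2) * x powr (nu - 1/2 - 1) * G + G' * (2 * x) * x powr (nu - 1/2))
      + 2 * ((nu + 3/2) * x powr (nu + 3/2 - 1) * G' + G'' * (2 * x) * x powr (nu + 3/2))) (at x)"
    (is "(_ has_real_derivative ?E) _")
    unfolding bessel_u'_def[abs_def] G_def G'_def G''_def
    by (intro DERIV_add DERIV_cmult DERIV_mult has_real_derivative_powr x
        has_real_derivative_bessel_G_square)
  have pw: "x powr (nu - 1/2 - 1) = P / x^2" "x powr (nu - 1/2) = P / x"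
    "x powr (nu + 3/2 - 1) = P" "x powr (nu + 3/2) = P * x"
  proof -
    have "nu - 1/2 - 1 = (nu + 1/2) - 2" "nu - 1/2 = (nu + 1/2) - 1"
      "nu + 3/2 - 1 = nu + 1/2" "nu + 3/2 = (nu + 1/2) + 1" by simp_all
    then show "x powr (nu - 1/2 - 1) = P / x^2" "x powr (nu - 1/2) = P / x"
      "x powr (nu + 3/2 - 1) = P" "x powr (nu + 3/2) = P * x"
      using x by (simp_all only: P_def powr_diff powr_add powr_numeral powr_one)
  qed
  have "?E = P * ((nu^2 - 1/4) / x^2 * G + (4 * x^2 * G'' + 4 * (nu + 1) * G'))"
    unfolding pw using x by (simp add: field_simps power2_eq_square)
  also have "4 * x^2 * G'' + 4 * (nu + 1) * G' = - G"
    using bessel_G_ode[OF nu, of "x^2"] unfolding G_def G'_def G''_def by linarith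
  finally have "?E = - bessel_q nu x * bessel_u nu x"
    by (simp add: bessel_q_def bessel_u_def G_def P_def algebra_simps)
  with D show ?thesis by simp
qed

end

section \<open>The positive zeros of the Bessel function\<close>

lemma abs_diff_le_telescoping:
  fixes x y :: "nat \<Rightarrow> real"
  assumes step: "\<And>n. N \<le> n \<Longrightarrow> \<bar>x (Suc n) - x n\<bar> \<le> y n - y (Suc n)" and "N \<le> n"
  shows "\<bar>x n - x N\<bar> \<le> y N - y n"
  using \<open>N \<le> n\<close>
proof (induction n rule: dec_induct)
  case (step n)
  then show ?case using assms(1)[of n] by linarith
qed simp

lemma abs_minus_pi_le_potential_drop:
  fixes J s E :: real
  assumes J: "4 * pi \<le> J" and E: "0 < E" "E / J^2 \<le> 1/8"
    and lo: "pi / (1 + E / J^2) \<le> s" and hi: "s \<le> pi / (1 - E / J^2)"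
  shows "\<bar>s - pi\<bar> \<le> 6 * E / J - 6 * E / (J + s)"
proof -
  define e where "e = E / J^2"
  have J0: "J > 0" using J pi_gt_zero by linarith
  have e: "0 < e" "e \<le> 1/8" using E J0 by (simp_all add: e_def)
  have "pi / (1 - e) \<le> pi * (1 + 2 * e)"
    using e pi_gt_zero by (simp add: field_simps)
  moreover have "pi * (1 - e) \<le> pi / (1 + e)"
    using e pi_gt_zero by (simp add: field_simps)
  ultimately have "pi - pi * e \<le> s" "s \<le> pi + 2 * (pi * e)"
    using lo hi unfolding e_def by (simp_all add: algebra_simps)
  moreover have "0 \<le> pi * e" "pi * e \<le> pi / 8" using e pi_gt_zero by simp_all
  ultimately have s_pi: "\<bar>s - pi\<bar> \<le> 2 * pi * e" and "pi / 2 \<le> s" "s \<le> J / 2"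
    using J pi_gt_zero by linarith+
  have Js: "J + s > 0" using J0 \<open>pi / 2 \<le> s\<close> pi_gt_zero by linarith
  have "2 * pi * (J + s) \<le> 2 * pi * (3/2 * J)" using \<open>s \<le> J / 2\<close> by (intro mult_left_mono) auto
  also have "\<dots> = 6 * (pi / 2) * J" by simp
  also have "\<dots> \<le> 6 * s * J" using \<open>pi / 2 \<le> s\<close> J0 by (intro mult_right_mono) auto
  finally have key: "2 * pi * (J + s) \<le> 6 * s * J" .
  have "E * (2 * pi * (J + s)) / (J^2 * (J + s)) = (E * (2 * pi)) * (J + s) / (J^2 * (J + s))"
    by (simp add: mult.assoc)
  then have "2 * pi * e = E * (2 * pi * (J + s)) / (J^2 * (J + s))"
    using Js by (simp add: e_def mult.commute)
  also have "\<dots> \<le> E * (6 * s * J) / (J^2 * (J + s))"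
    using key E J0 Js by (intro divide_right_mono mult_left_mono) auto
  also have "\<dots> = (6 * E * s) * J / ((J * (J + s)) * J)" by (simp add: mult_ac power2_eq_square)
  also have "\<dots> = 6 * E * s / (J * (J + s))"
    using J0 by (intro nonzero_mult_divide_mult_cancel_right) simp
  also have "\<dots> = 6 * E / J - 6 * E / (J + s)" using J0 Js by (simp add: field_simps)
  finally show ?thesis using s_pi by linarith
qed

lemma bessel_q_bounds:
  assumes "0 < y" "y \<le> x"
  shows "1 - \<bar>nu^2 - 1/4\<bar> / y^2 \<le> bessel_q nu x" "bessel_q nu x \<le> 1 + \<bar>nu^2 - 1/4\<bar> / y^2"
proof -
  have "\<bar>nu^2 - 1/4\<bar> / x^2 \<le> \<bar>nu^2 - 1/4\<bar> / y^2"
    using assms by (intro divide_left_mono power_mono) auto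
  moreover have "\<bar>(nu^2 - 1/4) / x^2\<bar> = \<bar>nu^2 - 1/4\<bar> / x^2" by (simp add: abs_divide)
  ultimately have "\<bar>(nu^2 - 1/4) / x^2\<bar> \<le> \<bar>nu^2 - 1/4\<bar> / y^2" by simp
  then show "1 - \<bar>nu^2 - 1/4\<bar> / y^2 \<le> bessel_q nu x" "bessel_q nu x \<le> 1 + \<bar>nu^2 - 1/4\<bar> / y^2"
    unfolding bessel_q_def abs_le_iff by linarith+
qed

definition bessel_zeros :: "real \<Rightarrow> real set" where
  "bessel_zeros nu = {x. 0 < x \<and> besselJ nu x = 0}"

definition bessel_zero_rank :: "real \<Rightarrow> real \<Rightarrow> nat" where
  "bessel_zero_rank nu x = card {y\<in>bessel_zeros nu. y < x}"

context
  fixes nu :: real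
  assumes nu: "nu > -1"
begin

lemma bessel_u_ode_on:
  assumes "0 < a"
  shows "\<And>x. x \<in> {a..b} \<Longrightarrow> (bessel_u nu has_real_derivative bessel_u' nu x) (at x)"
    and "\<And>x. x \<in> {a..b} \<Longrightarrow> (bessel_u' nu has_real_derivative - bessel_q nu x * bessel_u nu x) (at x)"
  using assms has_real_derivative_bessel_u[OF nu] has_real_derivative_bessel_u'[OF nu] by auto

lemma bessel_u_zero_within:
  assumes a: "0 < a" and e: "\<bar>nu^2 - 1/4\<bar> / a^2 < e" "e < 1"
  shows "\<exists>z\<in>{a<..a + pi / (1 - e)}. bessel_u nu z = 0"
proof (rule sturm_comparison_zero_exists[OF _ _ bessel_u_ode_on[OF a]])
  have "0 \<le> \<bar>nu^2 - 1/4\<bar> / a^2" by simp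
  then have "0 \<le> e" using e by linarith
  then have "(1 - e)^2 \<le> 1 - e"
    using e by (simp add: power2_eq_square mult_left_le_one_le)
  also have "\<dots> \<le> 1 - \<bar>nu^2 - 1/4\<bar> / a^2" using e by linarith
  finally show "(1 - e)^2 \<le> bessel_q nu x" if "x \<in> {a..a + pi / (1 - e)}" for x
    using bessel_q_bounds(1)[of a x nu] that a by auto
qed (use e in simp)

lemma bessel_zeros_unbounded: "\<exists>z\<in>bessel_zeros nu. X < z"
proof -
  define c where "c = \<bar>nu^2 - 1/4\<bar>"
  define a where "a = max X 0 + 1 + c"
  have a: "a > 0" "a > X" "a \<ge> 1 + c" "c \<ge> 0" by (auto simp: a_def c_def)
  then have "(1 + c)^2 \<le> a^2" by (intro power_mono) auto
  moreover have "(1 + c)^2 = 1 + 2 * c + c^2" by (simp add: power2_eq_square algebra_simps)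
  ultimately have "2 * c < a^2" using zero_le_power2[of c] by linarith
  then have "c / a^2 < 1/2" using a by (simp add: field_simps)
  then obtain z where z: "a < z" "bessel_u nu z = 0"
    using bessel_u_zero_within[OF \<open>a > 0\<close>, of "1/2"] by (auto simp: c_def)
  then have "z \<in> bessel_zeros nu"
    using a bessel_u_eq_0_iff[OF nu, of z] by (simp add: bessel_zeros_def)
  then show ?thesis using z a by (meson less_trans)
qed

lemma infinite_bessel_zeros: "infinite (bessel_zeros nu)"
proof
  assume "finite (bessel_zeros nu)"
  moreover obtain z where "z \<in> bessel_zeros nu" "Max (insert 0 (bessel_zeros nu)) < z"
    using bessel_zeros_unbounded by blast
  ultimately show False by (meson Max_ge finite_insert insertI2 not_le)
qed

lemma finite_bessel_zeros_below: "finite {y\<in>bessel_zeros nu. y < x}"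
  by (rule finite_subset[OF _ finite_besselJ_zeros[OF nu, of x]]) (auto simp: bessel_zeros_def)

lemma bessel_zero_rank_strict_mono:
  "y \<in> bessel_zeros nu \<Longrightarrow> z \<in> bessel_zeros nu \<Longrightarrow> y < z
    \<Longrightarrow> bessel_zero_rank nu y < bessel_zero_rank nu z"
  unfolding bessel_zero_rank_def by (rule rank_strict_mono) (auto intro: finite_bessel_zeros_below)

lemma bij_betw_bessel_zero_rank: "bij_betw (bessel_zero_rank nu) (bessel_zeros nu) UNIV"
  unfolding bessel_zero_rank_def[abs_def]
  by (rule bij_betw_rank) (auto intro: finite_bessel_zeros_below simp: infinite_bessel_zeros)

lemma bessel_zero_in_bessel_zeros:
  "bessel_zero nu n \<in> bessel_zeros nu \<and> bessel_zero_rank nu (bessel_zero nu n) = n - 1"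
proof -
  obtain x where x: "x \<in> bessel_zeros nu" "bessel_zero_rank nu x = n - 1"
    using bij_betw_bessel_zero_rank by (metis UNIV_I bij_betw_def imageE)
  moreover have "y = x" if "y \<in> bessel_zeros nu" "bessel_zero_rank nu y = n - 1" for y
    using bij_betw_bessel_zero_rank x that by (metis bij_betw_def inj_onD)
  ultimately have unique: "\<exists>!x. x \<in> bessel_zeros nu \<and> bessel_zero_rank nu x = n - 1" by blast
  have "{y. 0 < y \<and> y < x \<and> besselJ nu y = 0} = {y\<in>bessel_zeros nu. y < x}" for x
    by (auto simp: bessel_zeros_def)
  then have "bessel_zero nu n = (THE x. x \<in> bessel_zeros nu \<and> bessel_zero_rank nu x = n - 1)"
    unfolding bessel_zero_def bessel_zero_rank_def by (simp add: bessel_zeros_def conj_assoc)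
  then show ?thesis using theI'[OF unique] by simp
qed

lemma bessel_zero_pos: "bessel_zero nu n > 0"
  and besselJ_bessel_zero: "besselJ nu (bessel_zero nu n) = 0"
  using bessel_zero_in_bessel_zeros[of n] by (auto simp: bessel_zeros_def)

lemma bessel_u_bessel_zero: "bessel_u nu (bessel_zero nu n) = 0"
  using bessel_u_eq_0_iff[OF nu bessel_zero_pos] besselJ_bessel_zero by simp

lemma bessel_zero_strict_mono:
  assumes "1 \<le> n" "n < m"
  shows "bessel_zero nu n < bessel_zero nu m"
proof (rule ccontr)
  assume "\<not> bessel_zero nu n < bessel_zero nu m"
  then have "bessel_zero nu m = bessel_zero nu n \<or> bessel_zero nu m < bessel_zero nu n" by auto
  then have "bessel_zero_rank nu (bessel_zero nu m) \<le> bessel_zero_rank nu (bessel_zero nu n)"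
    using bessel_zero_rank_strict_mono bessel_zero_in_bessel_zeros by (metis order.order_iff_strict)
  then show False using bessel_zero_in_bessel_zeros[of n] bessel_zero_in_bessel_zeros[of m] assms
    by simp
qed

lemma bessel_zero_mono: "1 \<le> n \<Longrightarrow> n \<le> m \<Longrightarrow> bessel_zero nu n \<le> bessel_zero nu m"
  using bessel_zero_strict_mono[of n m] by (cases "n = m") auto

lemma bessel_zero_rank_Suc:
  assumes "z \<in> bessel_zeros nu"
  shows "bessel_zero nu (bessel_zero_rank nu z + 1) = z"
  using bij_betw_bessel_zero_rank assms bessel_zero_in_bessel_zeros[of "bessel_zero_rank nu z + 1"]
  by (metis add_diff_cancel_right' bij_betw_def inj_onD)

lemma bessel_zero_Suc_le:
  assumes "1 \<le> n" "z \<in> bessel_zeros nu" "bessel_zero nu n < z"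
  shows "bessel_zero nu (n + 1) \<le> z"
proof -
  define k where "k = bessel_zero_rank nu z + 1"
  have z: "z = bessel_zero nu k" using bessel_zero_rank_Suc[OF assms(2)] by (simp add: k_def)
  have "n < k"
  proof (rule ccontr)
    assume "\<not> n < k"
    then have "bessel_zero nu k \<le> bessel_zero nu n" using bessel_zero_mono[of k n] by (simp add: k_def)
    then show False using assms z by simp
  qed
  then show ?thesis using bessel_zero_mono[of "n + 1" k] z by simp
qed

lemma bessel_u_between_bessel_zeros:
  assumes "1 \<le> n" "x \<in> {bessel_zero nu n<..<bessel_zero nu (n + 1)}"
  shows "bessel_u nu x \<noteq> 0"
proof
  assume "bessel_u nu x = 0"
  then have "x \<in> bessel_zeros nu"
    using assms bessel_zero_pos[of n] bessel_u_eq_0_iff[OF nu, of x] by (simp add: bessel_zeros_def)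
  then show False using bessel_zero_Suc_le[OF assms(1)] assms by force
qed

lemma bessel_zero_Suc_diff_ge:
  assumes n: "1 \<le> n" and e: "\<bar>nu^2 - 1/4\<bar> / bessel_zero nu n ^ 2 < e"
  shows "pi / (1 + e) \<le> bessel_zero nu (n + 1) - bessel_zero nu n"
proof (rule sturm_comparison_zero_gap[where u = "bessel_u nu" and u' = "bessel_u' nu"])
  have "0 \<le> \<bar>nu^2 - 1/4\<bar> / bessel_zero nu n ^ 2" by simp
  then have "0 < e" using e by linarith
  then show "0 < 1 + e" by simp
  show "bessel_zero nu n < bessel_zero nu (n + 1)" using bessel_zero_strict_mono[OF n] by simp
  show "bessel_q nu x < (1 + e)^2" if "x \<in> {bessel_zero nu n..bessel_zero nu (n + 1)}" for x
  proof -
    have "bessel_q nu x \<le> 1 + \<bar>nu^2 - 1/4\<bar> / bessel_zero nu n ^ 2"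
      using bessel_q_bounds(2) bessel_zero_pos that by auto
    also have "\<dots> < 1 + e" using e by simp
    also have "\<dots> \<le> (1 + e)^2" using \<open>0 < e\<close> by (simp add: power2_eq_square)
    finally show ?thesis .
  qed
qed (use bessel_u_ode_on[OF bessel_zero_pos] bessel_u_bessel_zero
         bessel_u_between_bessel_zeros[OF n] in auto)

lemma bessel_zero_Suc_diff_le:
  assumes n: "1 \<le> n" and e: "\<bar>nu^2 - 1/4\<bar> / bessel_zero nu n ^ 2 < e" "e < 1"
  shows "bessel_zero nu (n + 1) - bessel_zero nu n \<le> pi / (1 - e)"
proof -
  obtain z where z: "z \<in> {bessel_zero nu n<..bessel_zero nu n + pi / (1 - e)}" "bessel_u nu z = 0"
    using bessel_u_zero_within[OF bessel_zero_pos e] by blast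
  then have "z \<in> bessel_zeros nu"
    using bessel_zero_pos[of n] bessel_u_eq_0_iff[OF nu, of z] by (simp add: bessel_zeros_def)
  then have "bessel_zero nu (n + 1) \<le> z" using bessel_zero_Suc_le[OF n] z by simp
  then show ?thesis using z by simp
qed

lemma bessel_zero_gap: "\<exists>\<sigma>>0. \<forall>n\<ge>1. \<sigma> \<le> bessel_zero nu (n + 1) - bessel_zero nu n"
proof (intro exI conjI allI impI)
  define e where "e = \<bar>nu^2 - 1/4\<bar> / bessel_zero nu 1 ^ 2 + 1"
  have "e > 0" by (simp add: e_def add_nonneg_pos)
  then show "pi / (1 + e) > 0" by simp
  fix n :: nat assume n: "1 \<le> n"
  have "bessel_zero nu 1 ^ 2 \<le> bessel_zero nu n ^ 2"
    using bessel_zero_mono[OF _ n] bessel_zero_pos[of 1] by (simp add: power_mono)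
  then have "\<bar>nu^2 - 1/4\<bar> / bessel_zero nu n ^ 2 \<le> \<bar>nu^2 - 1/4\<bar> / bessel_zero nu 1 ^ 2"
    using bessel_zero_pos[of 1] bessel_zero_pos[of n] by (intro divide_left_mono) auto
  then have "\<bar>nu^2 - 1/4\<bar> / bessel_zero nu n ^ 2 < e" unfolding e_def by linarith
  then show "pi / (1 + e) \<le> bessel_zero nu (n + 1) - bessel_zero nu n"
    by (rule bessel_zero_Suc_diff_ge[OF n])
qed

lemma bessel_zero_step:
  defines "E \<equiv> \<bar>nu^2 - 1/4\<bar> + 1"
  assumes n: "1 \<le> n" and big: "4 * pi + 2 * E < bessel_zero nu n"
  shows "\<bar>bessel_zero nu (n + 1) - bessel_zero nu n - pi\<bar>
    \<le> 6 * E / bessel_zero nu n - 6 * E / bessel_zero nu (n + 1)"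
proof -
  define J where "J = bessel_zero nu n"
  have J: "4 * pi + 2 * E < J" using big by (simp add: J_def)
  have E: "1 \<le> E" by (simp add: E_def)
  have "8 * E = 4 * (2 * E)" by simp
  also have "\<dots> \<le> J * J" using J E pi_gt3 by (intro mult_mono) auto
  finally have e: "E / J^2 \<le> 1/8" using E by (simp add: field_simps power2_eq_square)
  have lt: "\<bar>nu^2 - 1/4\<bar> / J^2 < E / J^2" using bessel_zero_pos[of n]
    by (intro divide_strict_right_mono) (auto simp: E_def J_def)
  have lt1: "E / J^2 < 1" using e by linarith
  have "pi / (1 + E / J^2) \<le> bessel_zero nu (n + 1) - J"
    using bessel_zero_Suc_diff_ge[OF n lt[unfolded J_def]] by (simp add: J_def)
  moreover have "bessel_zero nu (n + 1) - J \<le> pi / (1 - E / J^2)"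
    using bessel_zero_Suc_diff_le[OF n lt[unfolded J_def] lt1[unfolded J_def]] by (simp add: J_def)
  ultimately show ?thesis
    using abs_minus_pi_le_potential_drop[of J E "bessel_zero nu (n + 1) - J"] J E e pi_gt_zero
    by (simp add: J_def)
qed

text \<open>With \<open>x n = j\<^sub>n - \<pi> n\<close> the steps \<open>j\<^sub>n\<^sub>+\<^sub>1 - j\<^sub>n = \<pi> + O(j\<^sub>n\<^sup>-\<^sup>2)\<close> telescope against
  the decreasing potential \<open>6 E / j\<^sub>n\<close>.\<close>

lemma bessel_zero_asymptotic: "\<exists>C. \<forall>n\<ge>1. \<bar>bessel_zero nu n - pi * real n\<bar> \<le> C"
proof -
  define E where "E = \<bar>nu^2 - 1/4\<bar> + 1"
  define x where "x n = bessel_zero nu n - pi * real n" for n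
  define y where "y n = 6 * E / bessel_zero nu n" for n
  obtain z where z: "z \<in> bessel_zeros nu" "4 * pi + 2 * E < z"
    using bessel_zeros_unbounded by blast
  define N where "N = bessel_zero_rank nu z + 1"
  have N: "1 \<le> N" "4 * pi + 2 * E < bessel_zero nu N"
    using bessel_zero_rank_Suc[OF z(1)] z by (simp_all add: N_def)
  have step: "\<bar>x (Suc n) - x n\<bar> \<le> y n - y (Suc n)" if "N \<le> n" for n
    using bessel_zero_step[of n] bessel_zero_mono[OF N(1) that] N that
    by (simp add: x_def y_def E_def algebra_simps)
  define C where "C = \<bar>x N\<bar> + y N + (\<Sum>k<N. \<bar>x k\<bar>)"
  have "\<bar>x n\<bar> \<le> C" for n
  proof (cases "N \<le> n")
    case True
    have "0 \<le> y n" using bessel_zero_pos[of n] by (simp add: y_def E_def)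
    moreover have "0 \<le> (\<Sum>k<N. \<bar>x k\<bar>)" by (simp add: sum_nonneg)
    ultimately show ?thesis
      using abs_diff_le_telescoping[where x = x and y = y, OF step True] unfolding C_def by arith
  next
    case False
    then have "\<bar>x n\<bar> \<le> (\<Sum>k<N. \<bar>x k\<bar>)" by (intro member_le_sum) auto
    moreover have "0 \<le> y N" using bessel_zero_pos[of N] by (simp add: y_def E_def)
    ultimately show ?thesis by (simp add: C_def)
  qed
  then show ?thesis unfolding x_def by blast
qed

end

section \<open>Separation from a counting function\<close>

lemma counting_index_bounds:
  fixes f :: "nat \<Rightarrow> real"
  assumes p: "p > 0"
    and mono: "\<And>n m. 1 \<le> n \<Longrightarrow> n \<le> m \<Longrightarrow> f n \<le> f m"
    and pos: "\<And>n. 1 \<le> n \<Longrightarrow> 0 < f n"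
    and cnt: "\<And>r. 0 < r \<Longrightarrow> finite {n. 1 \<le> n \<and> f n \<le> r}
        \<and> \<bar>p * sqrt r - real (card {n. 1 \<le> n \<and> f n \<le> r})\<bar> \<le> s"
    and n: "1 \<le> n"
  shows "real n - s \<le> p * sqrt (f n)" and "p * sqrt (f n) \<le> real n - 1 + s"
proof -
  have cnt_n: "finite {k. 1 \<le> k \<and> f k \<le> f n}"
    "\<bar>p * sqrt (f n) - real (card {k. 1 \<le> k \<and> f k \<le> f n})\<bar> \<le> s"
    using cnt[OF pos[OF n]] by auto
  have "{1..n} \<subseteq> {k. 1 \<le> k \<and> f k \<le> f n}" using mono by auto
  then have "card {1..n} \<le> card {k. 1 \<le> k \<and> f k \<le> f n}" by (rule card_mono[OF cnt_n(1)])
  then have "real n \<le> real (card {k. 1 \<le> k \<and> f k \<le> f n})" by simp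
  then show "real n - s \<le> p * sqrt (f n)" using cnt_n(2) by linarith
  show "p * sqrt (f n) \<le> real n - 1 + s"
  proof (rule ccontr)
    assume contra: "\<not> p * sqrt (f n) \<le> real n - 1 + s"
    define t where "t = (real n - 1 + s) / p"
    have "0 \<le> s" using cnt_n(2) by linarith
    then have t: "0 \<le> t" "t < sqrt (f n)"
      using contra n p by (simp_all add: t_def field_simps mult.commute)
    then have "t^2 < (sqrt (f n))^2" by (intro power_strict_mono) auto
    then have "t^2 < f n" using pos[OF n] by simp
    define r where "r = (t^2 + f n) / 2"
    have r: "t^2 < r" "r < f n" "0 < r"
      using \<open>t^2 < f n\<close> pos[OF n] by (auto simp: r_def add_nonneg_pos)
    have "{k. 1 \<le> k \<and> f k \<le> r} \<subseteq> {1..n - 1}"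
    proof
      fix k assume k: "k \<in> {k. 1 \<le> k \<and> f k \<le> r}"
      have "\<not> n \<le> k" using mono[OF n, of k] k r by auto
      then show "k \<in> {1..n - 1}" using k by auto
    qed
    then have "card {k. 1 \<le> k \<and> f k \<le> r} \<le> card {1..n - 1}" by (intro card_mono) auto
    then have "real (card {k. 1 \<le> k \<and> f k \<le> r}) \<le> real n - 1" using n by simp
    then have "p * sqrt r \<le> real n - 1 + s" using cnt[OF \<open>0 < r\<close>] by linarith
    also have "\<dots> = p * t" using p by (simp add: t_def)
    finally have "sqrt r \<le> t" using p by simp
    then have "(sqrt r)^2 \<le> t^2" using r by (intro power_mono) auto
    then show False using r by simp
  qed
qed

lemma norm_diff_ge_of_counting:
  fixes Lam :: "nat \<Rightarrow> 'a::real_normed_vector"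
  assumes p: "p > 0"
    and mono: "\<And>n m. 1 \<le> n \<Longrightarrow> n \<le> m \<Longrightarrow> norm (Lam n) \<le> norm (Lam m)"
    and pos: "\<And>n. 1 \<le> n \<Longrightarrow> 0 < norm (Lam n)"
    and cnt: "\<And>r. 0 < r \<Longrightarrow> finite {n. 1 \<le> n \<and> norm (Lam n) \<le> r}
        \<and> \<bar>p * sqrt r - real (card {n. 1 \<le> n \<and> norm (Lam n) \<le> r})\<bar> \<le> s"
    and nm: "1 \<le> n" "n < m" "4 * s \<le> real m - real n"
  shows "((real m)^2 - (real n)^2) / (2 * p^2) \<le> norm (Lam m - Lam n)"
proof -
  note bounds = counting_index_bounds[of p "\<lambda>n. norm (Lam n)", OF p mono pos cnt]
  have "0 \<le> s" using cnt[OF pos[OF nm(1)]] by linarith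
  have "(real m - s) / p \<le> sqrt (norm (Lam m))" "sqrt (norm (Lam n)) \<le> (real n + s) / p"
    using bounds(1)[of m] bounds(2)[of n] nm p by (simp_all add: field_simps mult.commute)
  moreover have "0 \<le> (real m - s) / p" using nm \<open>0 \<le> s\<close> p by simp
  ultimately have "((real m - s) / p)^2 \<le> norm (Lam m)" "norm (Lam n) \<le> ((real n + s) / p)^2"
    by (metis power_mono real_sqrt_pow2 norm_ge_zero real_sqrt_ge_zero)+
  moreover have "((real m - s)^2 - (real n + s)^2) / p^2 = ((real m - s) / p)^2 - ((real n + s) / p)^2"
    by (simp add: power_divide diff_divide_distrib[symmetric])
  ultimately have "((real m - s)^2 - (real n + s)^2) / p^2 \<le> norm (Lam m) - norm (Lam n)"
    by linarith
  moreover have "((real m)^2 - (real n)^2) / 2 \<le> (real m - s)^2 - (real n + s)^2"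
  proof -
    have "((real m)^2 - (real n)^2) / 2 = ((real m - real n) / 2) * (real m + real n)"
      by (simp add: power2_eq_square algebra_simps)
    also have "\<dots> \<le> (real m - real n - 2 * s) * (real m + real n)"
      using nm by (intro mult_right_mono) auto
    also have "\<dots> = (real m - s)^2 - (real n + s)^2" by (simp add: power2_eq_square algebra_simps)
    finally show ?thesis .
  qed
  then have "((real m)^2 - (real n)^2) / 2 / p^2 \<le> ((real m - s)^2 - (real n + s)^2) / p^2"
    by (intro divide_right_mono) auto
  moreover have "norm (Lam m) - norm (Lam n) \<le> norm (Lam m - Lam n)" by (rule norm_triangle_ineq2)
  ultimately show ?thesis by simp
qed

section \<open>Squares of a sequence with linear asymptotics\<close>

text \<open>\<open>j\<close> stands for the zeros \<open>j\<^sub>\<nu>\<^sub>,\<^sub>n\<close> and \<open>L\<close> for the eigenvalues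
  \<open>\<lambda>\<^sub>\<alpha>\<^sub>,\<^sub>\<mu>\<^sub>,\<^sub>n = \<kappa>\<^sup>2 j\<^sub>\<nu>\<^sub>,\<^sub>n\<^sup>2\<close> with \<open>\<kappa> = (2 - \<alpha>) / 2\<close>.\<close>

locale squared_spectrum =
  fixes j :: "nat \<Rightarrow> real" and \<sigma> C \<kappa> :: real and L :: "nat \<Rightarrow> real"
  assumes j_pos: "\<And>n. 1 \<le> n \<Longrightarrow> 0 < j n"
    and sigma_pos: "0 < \<sigma>"
    and j_Suc_diff: "\<And>n. 1 \<le> n \<Longrightarrow> \<sigma> \<le> j (n + 1) - j n"
    and j_asymptotic: "\<And>n. 1 \<le> n \<Longrightarrow> \<bar>j n - pi * real n\<bar> \<le> C"
    and kappa_pos: "0 < \<kappa>"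
    and L_eq: "\<And>n. L n = \<kappa>^2 * (j n)^2"
begin

lemma C_nonneg: "0 \<le> C"
  using j_asymptotic[of 1] by simp

lemma j_diff_ge:
  assumes "1 \<le> n" "n < m"
  shows "\<sigma> \<le> j m - j n"
proof -
  have "Suc n \<le> m" using assms by simp
  then show ?thesis
  proof (induction m rule: dec_induct)
    case (step m)
    then show ?case using j_Suc_diff[of m] sigma_pos assms by simp
  qed (use j_Suc_diff[OF assms(1)] in simp)
qed

lemma j_mono: "1 \<le> n \<Longrightarrow> n \<le> m \<Longrightarrow> j n \<le> j m"
  using j_diff_ge[of n m] sigma_pos by (cases "n = m") auto

lemma L_pos:
  assumes "1 \<le> n"
  shows "0 < L n"
  using j_pos[OF assms] kappa_pos by (simp add: L_eq)

lemma L_diff_ge: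
  assumes "1 \<le> n" "n < m"
  shows "\<kappa>^2 * \<sigma> * (j m + j n) \<le> L m - L n"
proof -
  have "L m - L n = \<kappa>^2 * ((j m - j n) * (j m + j n))"
    by (simp add: L_eq algebra_simps power2_eq_square)
  moreover have "\<sigma> * (j m + j n) \<le> (j m - j n) * (j m + j n)"
    using j_diff_ge[OF assms] j_pos[OF assms(1)] j_pos[of m] assms by (intro mult_right_mono) auto
  ultimately show ?thesis using kappa_pos by (simp add: mult.assoc)
qed

lemma abs_L_diff_ge:
  assumes "1 \<le> n" "1 \<le> m" "n \<noteq> m"
  shows "\<kappa>^2 * \<sigma> * (j n + j m) \<le> \<bar>L n - L m\<bar>"
proof (cases "n < m")
  case True
  then show ?thesis using L_diff_ge[OF assms(1) True] by (simp add: add.commute)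
next
  case False
  then show ?thesis using L_diff_ge[OF assms(2), of n] assms by simp
qed

lemma abs_L_diff_ge_uniform:
  assumes "1 \<le> n" "1 \<le> m" "n \<noteq> m"
  shows "\<kappa>^2 * \<sigma> * j 1 \<le> \<bar>L n - L m\<bar>"
proof -
  have "j 1 \<le> j n + j m" using j_mono[of 1 n] j_pos[of m] assms by simp
  then have "\<kappa>^2 * \<sigma> * j 1 \<le> \<kappa>^2 * \<sigma> * (j n + j m)"
    using kappa_pos sigma_pos by (intro mult_left_mono) auto
  then show ?thesis using abs_L_diff_ge[OF assms] by linarith
qed

lemma abs_L_diff_eventually_gt:
  "\<exists>K. \<forall>n m. 1 \<le> n \<longrightarrow> 1 \<le> m \<longrightarrow> n \<noteq> m \<longrightarrow> K < max n m \<longrightarrow> R < \<bar>L n - L m\<bar>"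
proof (intro exI allI impI)
  define g where "g = \<kappa>^2 * \<sigma>"
  have g: "0 < g" using kappa_pos sigma_pos by (simp add: g_def)
  define K where "K = nat \<lceil>(R / g + C) / pi\<rceil>"
  have big: "R / g < j k" if "1 \<le> k" "K < k" for k
  proof -
    have "(R / g + C) / pi < real k"
      using that real_nat_ceiling_ge[of "(R / g + C) / pi"] by (simp add: K_def)
    then show ?thesis using j_asymptotic[OF that(1)] by (simp add: field_simps mult.commute)
  qed
  fix n m :: nat assume nm: "1 \<le> n" "1 \<le> m" "n \<noteq> m" "K < max n m"
  then have "K < n \<or> K < m" by (simp add: less_max_iff_disj)
  then have "R / g < j n + j m" using big[OF nm(1)] big[OF nm(2)] j_pos[OF nm(1)] j_pos[OF nm(2)] by force
  then have "R < g * (j n + j m)" using g by (simp add: field_simps)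
  then show "R < \<bar>L n - L m\<bar>" using abs_L_diff_ge[OF nm(1-3)] by (simp add: g_def)
qed

lemma L_strict_mono:
  assumes "1 \<le> n" "n < m"
  shows "L n < L m"
proof -
  have "0 < \<kappa>^2 * \<sigma> * (j m + j n)"
    using j_pos[of n] j_pos[of m] kappa_pos sigma_pos assms by (intro mult_pos_pos add_pos_pos) auto
  then show ?thesis using L_diff_ge[OF assms] by linarith
qed

lemma L_mono: "1 \<le> n \<Longrightarrow> n \<le> m \<Longrightarrow> L n \<le> L m"
  using L_strict_mono[of n m] by (cases "n = m") auto

lemma inj_on_L: "inj_on L {1..}"
  by (rule inj_onI) (metis atLeast_iff L_strict_mono less_irrefl nat_neq_iff)

lemma L_le_iff:
  assumes "1 \<le> n" "0 \<le> R"
  shows "L n \<le> R \<longleftrightarrow> j n \<le> sqrt R / \<kappa>"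
proof -
  have "L n = (\<kappa> * j n)^2" by (simp add: L_eq power_mult_distrib)
  moreover have "0 \<le> \<kappa> * j n" using kappa_pos j_pos[OF assms(1)] by simp
  ultimately have "L n \<le> R \<longleftrightarrow> \<kappa> * j n \<le> sqrt R"
    by (metis real_le_rsqrt real_sqrt_le_iff real_sqrt_unique)
  also have "\<dots> \<longleftrightarrow> j n \<le> sqrt R / \<kappa>" using kappa_pos by (simp add: field_simps)
  finally show ?thesis .
qed

lemma count_j_bounds:
  assumes "0 \<le> y"
  shows "finite {n. 1 \<le> n \<and> j n \<le> y}"
    and "real (card {n. 1 \<le> n \<and> j n \<le> y}) \<le> (y + C) / pi"
    and "(y - C) / pi - 1 \<le> real (card {n. 1 \<le> n \<and> j n \<le> y})"
proof -
  define k where "k = nat \<lfloor>(y + C) / pi\<rfloor>"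
  define k' where "k' = nat \<lfloor>(y - C) / pi\<rfloor>"
  have sub: "{n. 1 \<le> n \<and> j n \<le> y} \<subseteq> {1..k}"
  proof
    fix n assume n: "n \<in> {n. 1 \<le> n \<and> j n \<le> y}"
    then have "real n \<le> (y + C) / pi" using j_asymptotic[of n] by (auto simp: field_simps mult.commute)
    then show "n \<in> {1..k}" using n unfolding k_def by (simp add: le_nat_floor)
  qed
  then show fin: "finite {n. 1 \<le> n \<and> j n \<le> y}" using finite_subset by blast
  have "card {n. 1 \<le> n \<and> j n \<le> y} \<le> card {1..k}" by (rule card_mono[OF _ sub]) simp
  then have "real (card {n. 1 \<le> n \<and> j n \<le> y}) \<le> real k" by simp
  also have "real k \<le> (y + C) / pi" using assms C_nonneg unfolding k_def by (simp add: of_nat_nat)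
  finally show "real (card {n. 1 \<le> n \<and> j n \<le> y}) \<le> (y + C) / pi" .
  have "{1..k'} \<subseteq> {n. 1 \<le> n \<and> j n \<le> y}"
  proof
    fix n assume n: "n \<in> {1..k'}"
    then have "0 < k'" by simp
    then have "0 < \<lfloor>(y - C) / pi\<rfloor>" unfolding k'_def by simp
    then have "real k' = real_of_int \<lfloor>(y - C) / pi\<rfloor>" unfolding k'_def by (metis of_nat_nat less_imp_le)
    moreover have "real n \<le> real k'" using n by simp
    ultimately have "real n \<le> (y - C) / pi" using of_int_floor_le[of "(y - C) / pi"] by linarith
    then have "pi * real n \<le> y - C" by (simp add: field_simps mult.commute)
    then show "n \<in> {n. 1 \<le> n \<and> j n \<le> y}" using j_asymptotic[of n] n by auto
  qed
  then have "card {1..k'} \<le> card {n. 1 \<le> n \<and> j n \<le> y}" by (rule card_mono[OF fin])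
  then have "real k' \<le> real (card {n. 1 \<le> n \<and> j n \<le> y})" by simp
  moreover have "(y - C) / pi - 1 \<le> real k'" unfolding k'_def by linarith
  ultimately show "(y - C) / pi - 1 \<le> real (card {n. 1 \<le> n \<and> j n \<le> y})" by linarith
qed

lemma finite_L_le: "finite {n. 1 \<le> n \<and> L n \<le> R}"
proof (cases "0 \<le> R")
  case True
  then have "{n. 1 \<le> n \<and> L n \<le> R} = {n. 1 \<le> n \<and> j n \<le> sqrt R / \<kappa>}" using L_le_iff by auto
  then show ?thesis using count_j_bounds(1)[of "sqrt R / \<kappa>"] kappa_pos True by simp
next
  case False
  then have "{n. 1 \<le> n \<and> L n \<le> R} = {}" using L_pos by force
  then show ?thesis by (metis finite.emptyI)
qed

lemma count_L_bound:
  assumes "0 \<le> R"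
  shows "\<bar>real (card {n. 1 \<le> n \<and> L n \<le> R}) - sqrt R / (\<kappa> * pi)\<bar> \<le> C / pi + 1"
proof -
  have eq: "{n. 1 \<le> n \<and> L n \<le> R} = {n. 1 \<le> n \<and> j n \<le> sqrt R / \<kappa>}"
    using L_le_iff assms by auto
  have y: "0 \<le> sqrt R / \<kappa>" using assms kappa_pos by simp
  have "(sqrt R / \<kappa> + C) / pi = sqrt R / (\<kappa> * pi) + C / pi" by (simp add: add_divide_distrib)
  moreover have "(sqrt R / \<kappa> - C) / pi = sqrt R / (\<kappa> * pi) - C / pi" by (simp add: diff_divide_distrib)
  ultimately show ?thesis
    using count_j_bounds(2,3)[OF y] unfolding eq by (intro abs_leI) linarith+
qed

end

section \<open>The shifted union of a squared spectrum\<close>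

definition modulus_lex_less :: "complex \<Rightarrow> complex \<Rightarrow> bool" where
  "modulus_lex_less z w \<longleftrightarrow>
     cmod z < cmod w \<or> cmod z = cmod w \<and> (Re z < Re w \<or> Re z = Re w \<and> Im z < Im w)"

text \<open>With \<open>d = \<alpha>\<^sub>2 - \<alpha>\<^sub>1\<close>, \<open>spec\<close> is the family of the theorem; \<open>Lam\<close> lists it by
  increasing modulus, ties broken by \<open>modulus_lex_less\<close>, starting at index 1.\<close>

locale shifted_spectrum = squared_spectrum +
  fixes d :: complex
  assumes Re_d_nonneg: "0 \<le> Re d"
    and no_coincidence: "\<And>n l. 1 \<le> n \<Longrightarrow> 1 \<le> l \<Longrightarrow> n \<noteq> l \<Longrightarrow> complex_of_real (L n - L l) \<noteq> - d"
begin

definition spec :: "complex set" where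
  "spec = {complex_of_real (L n) + d | n. 1 \<le> n} \<union> {complex_of_real (L n) | n. 1 \<le> n}"

definition spec_rank :: "complex \<Rightarrow> nat" where
  "spec_rank z = card {w\<in>spec. modulus_lex_less w z}"

definition Lam :: "nat \<Rightarrow> complex" where
  "Lam n = inv_into spec spec_rank (n - 1)"

lemma spec_cases:
  assumes "z \<in> spec"
  obtains (shifted) n where "1 \<le> n" "z = complex_of_real (L n) + d"
    | (unshifted) n where "1 \<le> n" "z = complex_of_real (L n)"
  using assms unfolding spec_def by blast

lemma L_le_norm_shift: "L n \<le> cmod (complex_of_real (L n) + d)"
  using complex_Re_le_cmod[of "complex_of_real (L n) + d"] Re_d_nonneg by simp

lemma norm_shift_le: "1 \<le> n \<Longrightarrow> cmod (complex_of_real (L n) + d) \<le> L n + cmod d"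
  using norm_triangle_ineq[of "complex_of_real (L n)" d] L_pos[of n] by simp

lemma finite_spec_le: "finite {z\<in>spec. cmod z \<le> r}"
proof -
  have "{z\<in>spec. cmod z \<le> r} \<subseteq> (\<lambda>n. complex_of_real (L n) + d) ` {n. 1 \<le> n \<and> L n \<le> r}
      \<union> complex_of_real ` L ` {n. 1 \<le> n \<and> L n \<le> r}"
  proof
    fix z assume z: "z \<in> {z\<in>spec. cmod z \<le> r}"
    then have "z \<in> spec" by simp
    then show "z \<in> (\<lambda>n. complex_of_real (L n) + d) ` {n. 1 \<le> n \<and> L n \<le> r}
      \<union> complex_of_real ` L ` {n. 1 \<le> n \<and> L n \<le> r}"
    proof (cases rule: spec_cases)
      case (shifted n) then show ?thesis using z L_le_norm_shift[of n] by auto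
    next
      case (unshifted n) then show ?thesis using z L_pos[of n] by auto
    qed
  qed
  then show ?thesis using finite_L_le[of r] finite_subset by blast
qed

lemma infinite_spec: "infinite spec"
proof -
  have "complex_of_real ` L ` {1..} \<subseteq> spec" unfolding spec_def by auto
  moreover have "inj_on (complex_of_real \<circ> L) {1..}"
    using inj_on_L by (auto simp: inj_on_def)
  then have "infinite (complex_of_real ` L ` {1..})"
    by (metis finite_imageD image_comp infinite_Ici)
  ultimately show ?thesis using finite_subset by blast
qed

lemma bij_betw_spec_rank: "bij_betw spec_rank spec UNIV"
  and spec_rank_strict_mono:
    "\<And>z w. z \<in> spec \<Longrightarrow> w \<in> spec \<Longrightarrow> modulus_lex_less z w \<Longrightarrow> spec_rank z < spec_rank w"
proof -
  have irrefl: "\<And>z. \<not> modulus_lex_less z z"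
    and trans: "\<And>x y z. modulus_lex_less x y \<Longrightarrow> modulus_lex_less y z \<Longrightarrow> modulus_lex_less x z"
    and total: "\<And>z w. z \<noteq> w \<Longrightarrow> modulus_lex_less z w \<or> modulus_lex_less w z"
    by (auto simp: modulus_lex_less_def complex_eq_iff)
  have fin: "finite {w\<in>spec. modulus_lex_less w z}" for z
    by (rule finite_subset[OF _ finite_spec_le[of "cmod z"]]) (auto simp: modulus_lex_less_def)
  show "bij_betw spec_rank spec UNIV"
    unfolding spec_rank_def[abs_def] using irrefl trans total fin infinite_spec
    by (intro bij_betw_rank) blast+
  show "\<And>z w. z \<in> spec \<Longrightarrow> w \<in> spec \<Longrightarrow> modulus_lex_less z w \<Longrightarrow> spec_rank z < spec_rank w"
    unfolding spec_rank_def using irrefl trans fin by (rule rank_strict_mono) blast+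
qed

lemma Lam_in_spec: "Lam n \<in> spec" and spec_rank_Lam: "spec_rank (Lam n) = n - 1"
  using bij_betw_spec_rank unfolding Lam_def
  by (auto intro: inv_into_into simp: bij_betw_def f_inv_into_f)

lemma Lam_bij: "bij_betw Lam {1..} spec"
proof -
  have "bij_betw (\<lambda>n::nat. n - 1) {1..} UNIV" by (rule bij_betwI[where g = Suc]) auto
  from bij_betw_trans[OF this bij_betw_inv_into[OF bij_betw_spec_rank]] show ?thesis
    unfolding Lam_def[abs_def] by (simp add: comp_def)
qed

lemma Lam_mono:
  assumes "1 \<le> n" "n \<le> m"
  shows "cmod (Lam n) \<le> cmod (Lam m)"
proof (rule ccontr)
  assume "\<not> cmod (Lam n) \<le> cmod (Lam m)"
  then have "spec_rank (Lam m) < spec_rank (Lam n)"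
    by (intro spec_rank_strict_mono Lam_in_spec) (simp add: modulus_lex_less_def)
  then show False using spec_rank_Lam[of m] spec_rank_Lam[of n] assms by simp
qed

lemma Re_spec_ge: "z \<in> spec \<Longrightarrow> L 1 \<le> Re z"
  by (cases rule: spec_cases) (use L_mono[of 1] Re_d_nonneg in force)+

lemma abs_Im_spec_le: "z \<in> spec \<Longrightarrow> \<bar>Im z\<bar> \<le> \<bar>Im d\<bar>"
  by (cases rule: spec_cases) auto

lemma card_Lam_le:
  "finite {n. 1 \<le> n \<and> cmod (Lam n) \<le> r}"
  "card {n. 1 \<le> n \<and> cmod (Lam n) \<le> r} = card {z\<in>spec. cmod z \<le> r}"
proof -
  have eq: "{z\<in>spec. cmod z \<le> r} = Lam ` {n. 1 \<le> n \<and> cmod (Lam n) \<le> r}"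
    using Lam_bij Lam_in_spec unfolding bij_betw_def by auto
  have "inj_on Lam {n. 1 \<le> n \<and> cmod (Lam n) \<le> r}"
    using Lam_bij unfolding bij_betw_def by (rule inj_on_subset[OF conjunct1]) auto
  then show "finite {n. 1 \<le> n \<and> cmod (Lam n) \<le> r}"
    "card {n. 1 \<le> n \<and> cmod (Lam n) \<le> r} = card {z\<in>spec. cmod z \<le> r}"
    using finite_spec_le[of r] unfolding eq by (simp_all add: card_image finite_image_iff)
qed

lemma card_spec_le_split:
  "card {z\<in>spec. cmod z \<le> r} = card {n. 1 \<le> n \<and> L n \<le> r}
     + (if d = 0 then 0 else card {n. 1 \<le> n \<and> cmod (complex_of_real (L n) + d) \<le> r})"
proof -
  define A where "A = {complex_of_real (L n) | n. 1 \<le> n}"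
  define B where "B = {complex_of_real (L n) + d | n. 1 \<le> n}"
  have card_A: "card {z\<in>A. cmod z \<le> r} = card {n. 1 \<le> n \<and> L n \<le> r}"
  proof -
    have "{z\<in>A. cmod z \<le> r} = (\<lambda>n. complex_of_real (L n)) ` {n. 1 \<le> n \<and> L n \<le> r}"
      unfolding A_def using L_pos by force
    moreover have "inj_on (\<lambda>n. complex_of_real (L n)) {n. 1 \<le> n \<and> L n \<le> r}"
      using inj_on_L by (auto simp: inj_on_def)
    ultimately show ?thesis by (simp add: card_image)
  qed
  show ?thesis
  proof (cases "d = 0")
    case True
    then have "spec = A" unfolding spec_def A_def by simp
    then show ?thesis using True card_A by simp
  next
    case False
    have "{z\<in>B. cmod z \<le> r} = (\<lambda>n. complex_of_real (L n) + d) `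
        {n. 1 \<le> n \<and> cmod (complex_of_real (L n) + d) \<le> r}"
      unfolding B_def by auto
    moreover have "inj_on (\<lambda>n. complex_of_real (L n) + d) {n. 1 \<le> n \<and> cmod (complex_of_real (L n) + d) \<le> r}"
      using inj_on_L by (auto simp: inj_on_def)
    ultimately have card_B: "card {z\<in>B. cmod z \<le> r}
        = card {n. 1 \<le> n \<and> cmod (complex_of_real (L n) + d) \<le> r}"
      by (simp add: card_image)
    have "A \<inter> B = {}"
      using no_coincidence False unfolding A_def B_def
      by (auto simp: algebra_simps) (metis add_diff_cancel_right' diff_self neg_equal_iff_equal of_real_diff)
    moreover have "{z\<in>spec. cmod z \<le> r} = {z\<in>A. cmod z \<le> r} \<union> {z\<in>B. cmod z \<le> r}"
      by (auto simp: spec_def A_def B_def)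
    moreover have "finite {z\<in>A. cmod z \<le> r}" "finite {z\<in>B. cmod z \<le> r}"
      by (rule finite_subset[OF _ finite_spec_le[of r]], force simp: spec_def A_def B_def)+
    ultimately show ?thesis using card_A card_B False by (simp add: card_Un_disjoint disjoint_iff)
  qed
qed

lemma count_shift_bound:
  assumes r: "0 < r"
  shows "\<bar>real (card {n. 1 \<le> n \<and> cmod (complex_of_real (L n) + d) \<le> r}) - sqrt r / (\<kappa> * pi)\<bar>
    \<le> C / pi + 1 + sqrt (cmod d) / (\<kappa> * pi)"
proof -
  define N where "N = card {n. 1 \<le> n \<and> cmod (complex_of_real (L n) + d) \<le> r}"
  have kp: "\<kappa> * pi > 0" using kappa_pos by simp
  have sub: "{n. 1 \<le> n \<and> cmod (complex_of_real (L n) + d) \<le> r} \<subseteq> {n. 1 \<le> n \<and> L n \<le> r}"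
    using L_le_norm_shift order_trans by blast
  have sub': "{n. 1 \<le> n \<and> L n \<le> r - cmod d} \<subseteq> {n. 1 \<le> n \<and> cmod (complex_of_real (L n) + d) \<le> r}"
    using norm_shift_le by force
  have "N \<le> card {n. 1 \<le> n \<and> L n \<le> r}" unfolding N_def by (rule card_mono[OF finite_L_le sub])
  then have upper: "real N \<le> sqrt r / (\<kappa> * pi) + (C / pi + 1)"
    using count_L_bound[of r] r by (simp add: abs_le_iff)
  have "card {n. 1 \<le> n \<and> L n \<le> r - cmod d} \<le> N"
    unfolding N_def by (rule card_mono[OF finite_subset[OF sub finite_L_le] sub'])
  have lower: "sqrt r / (\<kappa> * pi) - (C / pi + 1) - sqrt (cmod d) / (\<kappa> * pi) \<le> real N"
  proof (cases "cmod d \<le> r")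
    case True
    have "sqrt r \<le> sqrt (r - cmod d) + sqrt (cmod d)"
      using sqrt_add_le_add_sqrt[of "r - cmod d" "cmod d"] True by simp
    then have "sqrt r / (\<kappa> * pi) \<le> sqrt (r - cmod d) / (\<kappa> * pi) + sqrt (cmod d) / (\<kappa> * pi)"
      using kp by (simp add: add_divide_distrib[symmetric] divide_right_mono)
    moreover have "sqrt (r - cmod d) / (\<kappa> * pi) - (C / pi + 1) \<le> real (card {n. 1 \<le> n \<and> L n \<le> r - cmod d})"
      using count_L_bound[of "r - cmod d"] True by (simp add: abs_le_iff)
    ultimately show ?thesis using \<open>card {n. 1 \<le> n \<and> L n \<le> r - cmod d} \<le> N\<close> by linarith
  next
    case False
    then have "sqrt r / (\<kappa> * pi) \<le> sqrt (cmod d) / (\<kappa> * pi)" using kp by (simp add: divide_right_mono)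
    moreover have "0 \<le> C / pi" using C_nonneg by simp
    moreover have "0 \<le> real N" by simp
    ultimately show ?thesis by linarith
  qed
  have "0 \<le> sqrt (cmod d) / (\<kappa> * pi)" using kp by simp
  then show ?thesis using upper lower unfolding N_def[symmetric] by (intro abs_leI) linarith+
qed

lemma spec_counting:
  "\<exists>p>0. \<exists>s>0. \<forall>r>0. finite {n. 1 \<le> n \<and> cmod (Lam n) \<le> r} \<and>
      \<bar>p * sqrt r - real (card {n. 1 \<le> n \<and> cmod (Lam n) \<le> r})\<bar> \<le> s"
proof -
  define p0 where "p0 = 1 / (\<kappa> * pi)"
  define s0 where "s0 = C / pi + 1"
  have p0: "p0 > 0" using kappa_pos by (simp add: p0_def)
  have s0: "s0 > 0" using C_nonneg by (simp add: s0_def add_nonneg_pos)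
  have div: "sqrt r / (\<kappa> * pi) = p0 * sqrt r" for r by (simp add: p0_def)
  show ?thesis
  proof (cases "d = 0")
    case True
    have "\<bar>p0 * sqrt r - real (card {n. 1 \<le> n \<and> cmod (Lam n) \<le> r})\<bar> \<le> s0" if "r > 0" for r
      using count_L_bound[of r] that True unfolding card_Lam_le(2) card_spec_le_split div s0_def
      by (simp add: abs_minus_commute)
    then show ?thesis using p0 s0 card_Lam_le(1) by blast
  next
    case False
    have "\<bar>(2 * p0) * sqrt r - real (card {n. 1 \<le> n \<and> cmod (Lam n) \<le> r})\<bar>
        \<le> 2 * s0 + p0 * sqrt (cmod d)" if "r > 0" for r
      using count_L_bound[of r] count_shift_bound[OF that] that False
      unfolding card_Lam_le(2) card_spec_le_split div s0_def by (simp add: abs_le_iff)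
    moreover have "2 * s0 + p0 * sqrt (cmod d) > 0" using s0 p0 by (simp add: add_pos_nonneg)
    ultimately show ?thesis using p0 card_Lam_le(1) by (metis zero_less_mult_iff zero_less_numeral)
  qed
qed

lemma norm_cross_diff_ge:
  "\<exists>c>0. \<forall>n m. 1 \<le> n \<longrightarrow> 1 \<le> m \<longrightarrow> complex_of_real (L n) + d \<noteq> complex_of_real (L m) \<longrightarrow>
     c \<le> cmod (complex_of_real (L n - L m) + d)"
proof (cases "d = 0")
  case True
  have "0 < \<kappa>^2 * \<sigma> * j 1" using kappa_pos sigma_pos j_pos[of 1] by simp
  moreover have "\<kappa>^2 * \<sigma> * j 1 \<le> cmod (complex_of_real (L n - L m) + d)"
    if "1 \<le> n" "1 \<le> m" "complex_of_real (L n) + d \<noteq> complex_of_real (L m)" for n m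
    using abs_L_diff_ge_uniform[of n m] that True by (metis add_0_right norm_of_real)
  ultimately show ?thesis by blast
next
  case False
  obtain K where big: "\<And>n m. 1 \<le> n \<Longrightarrow> 1 \<le> m \<Longrightarrow> n \<noteq> m \<Longrightarrow> K < max n m \<Longrightarrow>
      2 * cmod d < \<bar>L n - L m\<bar>"
    using abs_L_diff_eventually_gt by blast
  have far: "cmod d \<le> cmod (complex_of_real (L n - L m) + d)"
    if "1 \<le> n" "1 \<le> m" "n \<noteq> m" "K < max n m" for n m
  proof -
    have "cmod (complex_of_real (L n - L m)) = \<bar>L n - L m\<bar>" by (rule norm_of_real)
    then show ?thesis
      using big[OF that] norm_diff_ineq[of "complex_of_real (L n - L m)" d] by linarith
  qed
  define P where "P = {1..K} \<times> {1..K}"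
  define f where "f = (\<lambda>(n, m). cmod (complex_of_real (L n - L m) + d))"
  define c where "c = Min (insert (cmod d) (f ` P))"
  have f_pos: "0 < f (n, m)" if "(n, m) \<in> P" for n m
  proof -
    have "complex_of_real (L n - L m) + d \<noteq> 0"
      using no_coincidence[of n m] False that by (cases "n = m") (auto simp: P_def add_eq_0_iff2)
    then show ?thesis by (simp add: f_def)
  qed
  have "finite P" by (simp add: P_def)
  then have "0 < c" using f_pos False by (force simp: c_def)
  moreover have "c \<le> cmod (complex_of_real (L n - L m) + d)" if "1 \<le> n" "1 \<le> m" for n m
  proof (cases "n = m \<or> K < max n m")
    case True
    then have "cmod d \<le> cmod (complex_of_real (L n - L m) + d)"
      using far[OF that] by (cases "n = m") auto
    moreover have "c \<le> cmod d" using \<open>finite P\<close> by (simp add: c_def)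
    ultimately show ?thesis by linarith
  next
    case False
    then have "(n, m) \<in> P" using that by (auto simp: P_def)
    then have "c \<le> f (n, m)" unfolding c_def using \<open>finite P\<close> by (intro Min_le) auto
    then show ?thesis by (simp add: f_def)
  qed
  ultimately show ?thesis by blast
qed

lemma spec_separated: "\<exists>c>0. \<forall>z\<in>spec. \<forall>w\<in>spec. z \<noteq> w \<longrightarrow> c \<le> cmod (z - w)"
proof -
  define c1 where "c1 = \<kappa>^2 * \<sigma> * j 1"
  have c1: "0 < c1" using kappa_pos sigma_pos j_pos[of 1] by (simp add: c1_def)
  obtain c2 where c2: "0 < c2" and cross: "\<And>n m. 1 \<le> n \<Longrightarrow> 1 \<le> m \<Longrightarrow>
      complex_of_real (L n) + d \<noteq> complex_of_real (L m) \<Longrightarrow> c2 \<le> cmod (complex_of_real (L n - L m) + d)"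
    using norm_cross_diff_ge by blast
  have same: "c1 \<le> cmod (complex_of_real (L n) - complex_of_real (L m))"
    if "1 \<le> n" "1 \<le> m" "L n \<noteq> L m" for n m
    using abs_L_diff_ge_uniform[of n m] that unfolding c1_def by (metis norm_of_real of_real_diff)
  have "min c1 c2 \<le> cmod (z - w)" if "z \<in> spec" "w \<in> spec" "z \<noteq> w" for z w
    using that(1)
  proof (cases rule: spec_cases)
    case (shifted n)
    note z = this
    from that(2) show ?thesis
    proof (cases rule: spec_cases)
      case (shifted m) then show ?thesis using same[of n m] that z by fastforce
    next
      case (unshifted m)
      then have "c2 \<le> cmod (complex_of_real (L n - L m) + d)" using cross[of n m] that z by auto
      moreover have "z - w = complex_of_real (L n - L m) + d" using z unshifted by simp
      ultimately show ?thesis by simp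
    qed
  next
    case (unshifted n)
    note z = this
    from that(2) show ?thesis
    proof (cases rule: spec_cases)
      case (shifted m)
      then have "c2 \<le> cmod (complex_of_real (L m - L n) + d)" using cross[of m n] that z by auto
      moreover have "w - z = complex_of_real (L m - L n) + d" using z shifted by simp
      ultimately show ?thesis by (simp add: norm_minus_commute)
    next
      case (unshifted m) then show ?thesis using same[of n m] that z by fastforce
    qed
  qed
  then show ?thesis using c1 c2 by (metis min_less_iff_conj)
qed

lemma Re_Lam_pos: "0 < Re (Lam n)"
  using Re_spec_ge[OF Lam_in_spec[of n]] L_pos[of 1] by simp

lemma abs_Im_Lam_le: "\<exists>\<delta>>0. \<forall>n. 1 \<le> n \<longrightarrow> \<bar>Im (Lam n)\<bar> \<le> \<delta> * sqrt (Re (Lam n))"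
proof (intro exI conjI allI impI)
  define \<delta> where "\<delta> = \<bar>Im d\<bar> / sqrt (L 1) + 1"
  have L1: "0 < sqrt (L 1)" using L_pos[of 1] by simp
  then show "0 < \<delta>" by (simp add: \<delta>_def add_nonneg_pos)
  fix n :: nat
  have "\<bar>Im (Lam n)\<bar> \<le> \<bar>Im d\<bar>" by (rule abs_Im_spec_le[OF Lam_in_spec])
  also have "\<dots> \<le> \<delta> * sqrt (L 1)" using L1 by (simp add: \<delta>_def algebra_simps)
  also have "\<dots> \<le> \<delta> * sqrt (Re (Lam n))"
    using Re_spec_ge[OF Lam_in_spec, of n] \<open>0 < \<delta>\<close> by (intro mult_left_mono) auto
  finally show "\<bar>Im (Lam n)\<bar> \<le> \<delta> * sqrt (Re (Lam n))" .
qed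

lemma Lam_separation:
  "\<exists>\<rho>>0. \<exists>q>0.
     (\<forall>n m. 1 \<le> n \<longrightarrow> 1 \<le> m \<longrightarrow> \<bar>real n - real m\<bar> \<ge> q \<longrightarrow>
        cmod (Lam n - Lam m) \<ge> \<rho> * \<bar>(real n)^2 - (real m)^2\<bar>)
   \<and> (\<exists>c>0. \<forall>n m. 1 \<le> n \<longrightarrow> 1 \<le> m \<longrightarrow> n \<noteq> m \<longrightarrow> \<bar>real n - real m\<bar> < q \<longrightarrow>
        cmod (Lam n - Lam m) \<ge> c)"
proof -
  obtain p s where p: "p > 0" "s > 0" and cnt: "\<And>r. 0 < r \<Longrightarrow> finite {n. 1 \<le> n \<and> cmod (Lam n) \<le> r}
      \<and> \<bar>p * sqrt r - real (card {n. 1 \<le> n \<and> cmod (Lam n) \<le> r})\<bar> \<le> s"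
    using spec_counting by blast
  have pos: "0 < cmod (Lam n)" for n
    using Re_Lam_pos[of n] complex_Re_le_cmod[of "Lam n"] by linarith
  note far = norm_diff_ge_of_counting[OF p(1) Lam_mono pos cnt]
  have ordered: "((real n)^2 - (real m)^2) / (2 * p^2) \<le> cmod (Lam n - Lam m)"
    if "1 \<le> n" "1 \<le> m" "4 * s \<le> \<bar>real n - real m\<bar>" for n m
  proof (cases "m < n")
    case True
    then show ?thesis using far[of m n] that by simp
  next
    case False
    then have "((real n)^2 - (real m)^2) / (2 * p^2) \<le> 0" using p by (intro divide_nonpos_pos) auto
    then show ?thesis using norm_ge_zero order_trans by blast
  qed
  have far': "1 / (2 * p^2) * \<bar>(real n)^2 - (real m)^2\<bar> \<le> cmod (Lam n - Lam m)"
    if "1 \<le> n" "1 \<le> m" "4 * s \<le> \<bar>real n - real m\<bar>" for n m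
    using ordered[OF that] ordered[of m n] that by (cases "m \<le> n") (auto simp: norm_minus_commute abs_minus_commute abs_if)
  obtain c where "c > 0"
    and sep: "\<And>z w. z \<in> spec \<Longrightarrow> w \<in> spec \<Longrightarrow> z \<noteq> w \<Longrightarrow> c \<le> cmod (z - w)"
    using spec_separated by blast
  have near: "c \<le> cmod (Lam n - Lam m)" if "1 \<le> n" "1 \<le> m" "n \<noteq> m" for n m
  proof -
    have "Lam n \<noteq> Lam m" using Lam_bij that unfolding bij_betw_def inj_on_def by auto
    then show ?thesis using sep Lam_in_spec by blast
  qed
  show ?thesis
  proof (intro exI conjI)
    show "0 < 1 / (2 * p^2)" "0 < 4 * s" using p by simp_all
  qed (use far' near \<open>c > 0\<close> in auto)
qed

end

lemma nu_of_nonneg: "alpha < 2 \<Longrightarrow> mu \<le> mu_crit alpha \<Longrightarrow> 0 \<le> nu_of alpha mu"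
  by (simp add: nu_of_def)

lemma Re_eig2_minus_eig1_nonneg: "0 \<le> Re (eig2 a1 a2 - eig1 a1 a2)"
  by (simp add: eig1_def eig2_def)

theorem proposition3p5:
  fixes alpha mu a1 a2 :: real
  assumes "0 \<le> alpha" and "alpha < 1"
    and "mu \<le> mu_crit alpha"
    and gap: "\<forall>n l. 1 \<le> n \<longrightarrow> 1 \<le> l \<longrightarrow> n \<noteq> l \<longrightarrow>
               complex_of_real (lam alpha mu n - lam alpha mu l) \<noteq> eig1 a1 a2 - eig2 a1 a2"
  shows "\<exists>\<Lambda> :: nat \<Rightarrow> complex.
     bij_betw \<Lambda> {1..}
       ({complex_of_real (lam alpha mu n) - eig1 a1 a2 + eig2 a1 a2 | n. 1 \<le> n}
        \<union> {complex_of_real (lam alpha mu n) | n. 1 \<le> n})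
   \<and> (\<forall>n m. 1 \<le> n \<longrightarrow> 1 \<le> m \<longrightarrow> n \<noteq> m \<longrightarrow> \<Lambda> n \<noteq> \<Lambda> m)
   \<and> (\<forall>n. 1 \<le> n \<longrightarrow> Re (\<Lambda> n) > 0)
   \<and> (\<exists>\<delta>>0. \<forall>n. 1 \<le> n \<longrightarrow> \<bar>Im (\<Lambda> n)\<bar> \<le> \<delta> * sqrt (Re (\<Lambda> n)))
   \<and> (\<forall>n. 1 \<le> n \<longrightarrow> cmod (\<Lambda> n) \<le> cmod (\<Lambda> (n + 1)))
   \<and> (\<exists>\<rho>>0. \<exists>q>0.
        (\<forall>n m. 1 \<le> n \<longrightarrow> 1 \<le> m \<longrightarrow> \<bar>real n - real m\<bar> \<ge> q \<longrightarrow>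
            cmod (\<Lambda> n - \<Lambda> m) \<ge> \<rho> * \<bar>(real n)^2 - (real m)^2\<bar>)
      \<and> (\<exists>c>0. \<forall>n m. 1 \<le> n \<longrightarrow> 1 \<le> m \<longrightarrow> n \<noteq> m \<longrightarrow> \<bar>real n - real m\<bar> < q \<longrightarrow>
            cmod (\<Lambda> n - \<Lambda> m) \<ge> c))
   \<and> (\<exists>p>0. \<exists>s>0. \<forall>r>0.
        finite {n. 1 \<le> n \<and> cmod (\<Lambda> n) \<le> r} \<and>
        \<bar>p * sqrt r - real (card {n. 1 \<le> n \<and> cmod (\<Lambda> n) \<le> r})\<bar> \<le> s)"
proof -
  define nu where "nu = nu_of alpha mu"
  have nu: "nu > -1" using nu_of_nonneg[of alpha mu] assms unfolding nu_def by simp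
  obtain \<sigma> where "0 < \<sigma>" "\<forall>n\<ge>1. \<sigma> \<le> bessel_zero nu (n + 1) - bessel_zero nu n"
    using bessel_zero_gap[OF nu] by blast
  moreover obtain C where "\<forall>n\<ge>1. \<bar>bessel_zero nu n - pi * real n\<bar> \<le> C"
    using bessel_zero_asymptotic[OF nu] by blast
  ultimately interpret shifted_spectrum "bessel_zero nu" \<sigma> C "(2 - alpha) / 2" "lam alpha mu"
      "eig2 a1 a2 - eig1 a1 a2"
    using assms bessel_zero_pos[OF nu] Re_eig2_minus_eig1_nonneg
    by unfold_locales (auto simp: lam_def nu_def)
  have "{complex_of_real (lam alpha mu n) - eig1 a1 a2 + eig2 a1 a2 | n. 1 \<le> n}
      = {complex_of_real (lam alpha mu n) + (eig2 a1 a2 - eig1 a1 a2) | n. 1 \<le> n}"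
    by (simp add: algebra_simps)
  then show ?thesis
    using Lam_bij Re_Lam_pos abs_Im_Lam_le Lam_mono Lam_separation spec_counting
    unfolding spec_def bij_betw_def inj_on_def by (intro exI[of _ Lam]) auto
qed

end
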